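(* Let $p$ be a prime and let $\lambda,\mu$ be probability measures on $\mathbb F_p$. Then $$\sum_{b\in\mathbb F_p^*}\lambda(b)\,\|\mu*\rho_b[\mu]\|_2\ll\left(\|\lambda\|_2+\|\mu\|_2+\|\mu\|_2^{-1}p^{-1/2}\right)^{c_0/7}\|\mu\|_2,$$ where the implied constant is absolute.
   Context: $\mathbb F_p^*=\mathbb F_p\setminus\{0\}$. A probability measure on $\mathbb F_p$ is a function $f:\mathbb F_p\to\mathbb R_{\ge0}$ with $\sum_x f(x)=1$. For $f:\mathbb F_p\to\mathbb C$, $\|f\|_r=(\sum_{x\in\mathbb F_p}|f(x)|^r)^{1/r}$; $f*g(x)=\sum_{y\in\mathbb F_p}f(y)g(x-y)$; for $z\in\mathbb F_p^*$, $\rho_z[f](x)=f(x/z)$. For $A,B\subset\mathbb F_p$, $E(A,B)$ is the number of solutions of $a_1+b_1=a_2+b_2$ with $a_i\in A$, $b_i\in B$, and $bA=\{ba:a\in A\}$. Here $c_0>0$ is a fixed absolute constant (whose existence is a theorem of Bourgain) such that for every prime $p$ and all $A\subset\mathbb F_p$, $B\subset\mathbb F_p^*$ with $|A|\ge|B|$ one has $\sum_{b\in B}E(A,bA)\ll\min(p/|A|,|B|)^{-c_0}|A|^3|B|$. *)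

theory Defs
  imports Complex_Main "HOL-Computational_Algebra.Primes"
begin

text \<open>The field F_p is represented by the residues {0..<p} of the integers,
  with arithmetic taken mod p. Functions on F_p are functions int => real,
  of which only the values on {0..<p} matter.\<close>

definition Fp :: "int \<Rightarrow> int set" where
  "Fp p = {0..<p}"

definition Fp_star :: "int \<Rightarrow> int set" where
  "Fp_star p = Fp p - {0}"

definition prob_measure :: "int \<Rightarrow> (int \<Rightarrow> real) \<Rightarrow> bool" where
  "prob_measure p f \<longleftrightarrow> (\<forall>x\<in>Fp p. 0 \<le> f x) \<and> (\<Sum>x\<in>Fp p. f x) = 1"

definition norm2 :: "int \<Rightarrow> (int \<Rightarrow> real) \<Rightarrow> real" where
  "norm2 p f = sqrt (\<Sum>x\<in>Fp p. \<bar>f x\<bar> ^ 2)"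

definition conv :: "int \<Rightarrow> (int \<Rightarrow> real) \<Rightarrow> (int \<Rightarrow> real) \<Rightarrow> int \<Rightarrow> real" where
  "conv p f g x = (\<Sum>y\<in>Fp p. f y * g ((x - y) mod p))"

definition fdiv :: "int \<Rightarrow> int \<Rightarrow> int \<Rightarrow> int" where
  "fdiv p x z = (THE y. y \<in> Fp p \<and> (y * z) mod p = x mod p)"

definition dil :: "int \<Rightarrow> int \<Rightarrow> (int \<Rightarrow> real) \<Rightarrow> int \<Rightarrow> real" where
  "dil p z f x = f (fdiv p x z)"

definition add_energy :: "int \<Rightarrow> int set \<Rightarrow> int set \<Rightarrow> nat" where
  "add_energy p A B = card {(a1, b1, a2, b2). a1 \<in> A \<and> b1 \<in> B \<and> a2 \<in> A \<and> b2 \<in> B \<and>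
      (a1 + b1) mod p = (a2 + b2) mod p}"

definition dilset :: "int \<Rightarrow> int \<Rightarrow> int set \<Rightarrow> int set" where
  "dilset p b A = (\<lambda>a. (b * a) mod p) ` A"

definition bourgain_energy :: "real \<Rightarrow> bool" where
  "bourgain_energy c0 \<longleftrightarrow> (\<exists>K. \<forall>p A B. prime p \<and> A \<subseteq> Fp p \<and> B \<subseteq> Fp_star p \<and>
      B \<noteq> {} \<and> card B \<le> card A \<longrightarrow>
      real (\<Sum>b\<in>B. add_energy p A (dilset p b A))
        \<le> K * (min (real_of_int p / real (card A)) (real (card B))) powr (- c0)
            * real (card A) ^ 3 * real (card B))"

end

theory Submission
  imports Defs "HOL-Analysis.Analysis"
begin

text \<open>Let $n = \|\mu\|_2$, let $X$ be the bracket on the right-hand side and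
  $\delta = X^{c_0/7}$. For $X \geq 1$ Young's inequality gives the bound $n$. Otherwise
  discarding the values of $\mu$ below $\delta^2 n^2$ and above $n^2/\delta$ costs $O(\delta n)$.
  What remains is at most $n^2/\delta$ on a set $D$ with $|D| \leq (\delta n)^{-2}$, so its
  dilated self-convolutions are bounded by $(n^2/\delta)^2 E(D, bD)^{1/2}$. Grouping the $b$
  according to the dyadic size of $\lambda(b)$ and applying Bourgain's estimate to each group,
  in chunks of $|D|$ dilations, bounds the $\lambda$-average of $E(D, bD)^{1/2}$ by
  $|D|^{3/2}(\min(p/|D|, |D|)^{-c_0/2} + \|\lambda\|_2^{c_0})$, which is $O(\delta n)$ once
  multiplied out, unless $D$ is so small that Young's inequality already gives $\delta n$. The
  exponent bookkeeping uses $c_0 < 1$, which Bourgain's estimate forces.\<close>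

section \<open>Arithmetic in the residue field\<close>

lemma Fp_finite [simp]: "finite (Fp p)"
  unfolding Fp_def by simp

lemma Fp_star_finite [simp]: "finite (Fp_star p)"
  unfolding Fp_star_def by simp

lemma Fp_star_subset_Fp: "Fp_star p \<subseteq> Fp p"
  unfolding Fp_star_def by auto

lemma mod_in_Fp: "prime (p::int) \<Longrightarrow> x mod p \<in> Fp p"
  unfolding Fp_def using prime_gt_1_int[of p] by auto

lemma mod_eq_self_Fp: "x \<in> Fp p \<Longrightarrow> x mod p = x"
  unfolding Fp_def by auto

lemma Fp_star_invertible:
  assumes p: "prime (p::int)" and b: "b \<in> Fp_star p"
  obtains b' where "(b * b') mod p = 1"
proof -
  have "0 < b" "b < p" using b unfolding Fp_star_def Fp_def by auto
  then have "coprime b p"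
    using prime_imp_coprime[OF p zdvd_not_zless] by (simp add: coprime_commute)
  then obtain u v where "u * b + v * p = 1" using bezout_int[of b p] by auto
  then have "b * u = 1 + (- v) * p" by (simp add: algebra_simps)
  then have "(b * u) mod p = 1 mod p" using mod_mult_self1[of 1 "- v" p] by presburger
  then show thesis using prime_gt_1_int[OF p] that by simp
qed

lemma fdiv_unique:
  assumes p: "prime (p::int)" and b: "b \<in> Fp_star p"
  shows "\<exists>!y. y \<in> Fp p \<and> (y * b) mod p = x mod p"
proof -
  obtain b' where b': "(b * b') mod p = 1" using Fp_star_invertible[OF p b] .
  have "(x * b') mod p \<in> Fp p \<and> ((x * b') mod p * b) mod p = x mod p"
  proof
    show "(x * b') mod p \<in> Fp p" using mod_in_Fp[OF p] .
    have "((x * b') mod p * b) mod p = (x * b' * b) mod p" by (rule mod_mult_left_eq)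
    also have "\<dots> = (x * (b * b')) mod p" by (simp add: algebra_simps)
    also have "\<dots> = (x * ((b * b') mod p)) mod p" by (rule mod_mult_right_eq[symmetric])
    finally show "((x * b') mod p * b) mod p = x mod p" using b' by simp
  qed
  moreover have "y1 = y2" if "y1 \<in> Fp p" "y2 \<in> Fp p" "(y1 * b) mod p = (y2 * b) mod p" for y1 y2
  proof -
    have "y1 mod p = (y1 * ((b * b') mod p)) mod p" using b' by simp
    also have "\<dots> = (((y1 * b) mod p) * b') mod p" by (simp add: mod_mult_right_eq mod_mult_left_eq mult.assoc)
    also have "\<dots> = (((y2 * b) mod p) * b') mod p" using that(3) by simp
    also have "\<dots> = (y2 * ((b * b') mod p)) mod p" by (simp add: mod_mult_right_eq mod_mult_left_eq mult.assoc)
    also have "\<dots> = y2 mod p" using b' by simp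
    finally show ?thesis using that(1,2) by (simp add: mod_eq_self_Fp)
  qed
  ultimately show ?thesis by (metis (no_types, lifting))
qed

lemma fdiv_correct:
  assumes "prime (p::int)" and "b \<in> Fp_star p"
  shows "fdiv p x b \<in> Fp p" and "(fdiv p x b * b) mod p = x mod p"
  using theI'[OF fdiv_unique[OF assms]] unfolding fdiv_def by blast+

lemma fdiv_eqI:
  assumes "prime (p::int)" and "b \<in> Fp_star p" and "y \<in> Fp p" and "(y * b) mod p = x mod p"
  shows "fdiv p x b = y"
  unfolding fdiv_def using assms fdiv_unique[OF assms(1,2)] by (blast intro: the1_equality)

lemma fdiv_mult_cancel:
  "prime (p::int) \<Longrightarrow> b \<in> Fp_star p \<Longrightarrow> y \<in> Fp p \<Longrightarrow> fdiv p ((b * y) mod p) b = y"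
  by (rule fdiv_eqI) (simp_all add: mult.commute)

lemma mult_fdiv_cancel:
  "prime (p::int) \<Longrightarrow> b \<in> Fp_star p \<Longrightarrow> z \<in> Fp p \<Longrightarrow> (b * fdiv p z b) mod p = z"
  using fdiv_correct(2)[of p b z] by (simp add: mult.commute mod_eq_self_Fp)

lemma bij_betw_fdiv:
  assumes p: "prime (p::int)" and b: "b \<in> Fp_star p"
  shows "bij_betw (\<lambda>x. fdiv p x b) (Fp p) (Fp p)"
  by (rule bij_betw_byWitness[where f' = "\<lambda>y. (b * y) mod p"])
    (use mult_fdiv_cancel[OF p b] fdiv_mult_cancel[OF p b] fdiv_correct(1)[OF p b] mod_in_Fp[OF p] in auto)

lemma sum_dil:
  assumes "prime (p::int)" and "b \<in> Fp_star p"
  shows "(\<Sum>x\<in>Fp p. F (dil p b f x)) = (\<Sum>x\<in>Fp p. F (f x))"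
  unfolding dil_def using sum.reindex_bij_betw[OF bij_betw_fdiv[OF assms], of "\<lambda>x. F (f x)"] by simp

lemma dilset_subset_Fp: "prime (p::int) \<Longrightarrow> dilset p b D \<subseteq> Fp p"
  unfolding dilset_def using mod_in_Fp by blast

lemma mem_dilset_iff:
  assumes p: "prime (p::int)" and b: "b \<in> Fp_star p" and D: "D \<subseteq> Fp p" and z: "z \<in> Fp p"
  shows "z \<in> dilset p b D \<longleftrightarrow> fdiv p z b \<in> D"
  unfolding dilset_def using fdiv_mult_cancel[OF p b] mult_fdiv_cancel[OF p b z] D by force

lemma card_dilset:
  assumes p: "prime (p::int)" and b: "b \<in> Fp_star p" and D: "D \<subseteq> Fp p"
  shows "card (dilset p b D) = card D"
  unfolding dilset_def
  by (rule card_image, rule inj_onI) (metis D fdiv_mult_cancel[OF p b] subsetD)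

lemma sum_translate:
  assumes p: "prime (p::int)"
  shows "(\<Sum>x\<in>Fp p. F ((x - y) mod p)) = (\<Sum>x\<in>Fp p. F x)"
proof -
  have "bij_betw (\<lambda>x. (x - y) mod p) (Fp p) (Fp p)"
    by (rule bij_betw_byWitness[where f' = "\<lambda>x. (x + y) mod p"])
      (use mod_in_Fp[OF p] in \<open>auto simp: mod_eq_self_Fp mod_add_left_eq mod_diff_left_eq\<close>)
  then show ?thesis using sum.reindex_bij_betw[of _ "Fp p" "Fp p" F] by simp
qed

lemma conv_commute:
  assumes p: "prime (p::int)"
  shows "conv p f g = conv p g f"
proof
  fix x
  have bij: "bij_betw (\<lambda>z. (x - z) mod p) (Fp p) (Fp p)"
    by (rule bij_betw_byWitness[where f' = "\<lambda>z. (x - z) mod p"])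
      (use mod_in_Fp[OF p] in \<open>auto simp: mod_eq_self_Fp mod_diff_right_eq\<close>)
  have "conv p g f x = (\<Sum>z\<in>Fp p. g ((x - z) mod p) * f ((x - (x - z) mod p) mod p))"
    unfolding conv_def using sum.reindex_bij_betw[OF bij, of "\<lambda>y. g y * f ((x - y) mod p)"] by simp
  also have "\<dots> = conv p f g x"
    unfolding conv_def by (rule sum.cong) (auto simp: mod_eq_self_Fp mod_diff_right_eq)
  finally show "conv p f g x = conv p g f x" ..
qed

section \<open>Norms, convolutions and probability measures\<close>

lemma norm2_eq_L2_set: "norm2 p f = L2_set f (Fp p)"
  unfolding norm2_def L2_set_def by simp

lemma norm2_nonneg: "0 \<le> norm2 p f"
  unfolding norm2_eq_L2_set by simp

lemma norm2_squared: "(norm2 p f)\<^sup>2 = (\<Sum>x\<in>Fp p. (f x)\<^sup>2)"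
  unfolding norm2_def by (simp add: sum_nonneg)

lemma norm2_le_iff_squared_le:
  "0 \<le> B \<Longrightarrow> norm2 p f \<le> B \<longleftrightarrow> (\<Sum>x\<in>Fp p. (f x)\<^sup>2) \<le> B\<^sup>2"
  by (metis norm2_nonneg norm2_squared power2_le_iff_abs_le abs_of_nonneg)

lemma norm2_triangle: "norm2 p (\<lambda>x. f x + g x) \<le> norm2 p f + norm2 p g"
  unfolding norm2_eq_L2_set by (rule L2_set_triangle_ineq)

lemma norm2_mono:
  assumes "\<And>x. x \<in> Fp p \<Longrightarrow> \<bar>f x\<bar> \<le> g x"
  shows "norm2 p f \<le> norm2 p g"
proof -
  have "norm2 p f = L2_set (\<lambda>x. \<bar>f x\<bar>) (Fp p)" unfolding norm2_def L2_set_def by simp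
  also have "\<dots> \<le> L2_set g (Fp p)" by (rule L2_set_mono) (use assms in auto)
  finally show ?thesis unfolding norm2_eq_L2_set .
qed

lemma norm2_const_mult: "0 \<le> c \<Longrightarrow> norm2 p (\<lambda>x. c * f x) = c * norm2 p f"
  unfolding norm2_eq_L2_set by (simp add: L2_set_right_distrib)

lemma norm2_dil:
  "prime (p::int) \<Longrightarrow> b \<in> Fp_star p \<Longrightarrow> norm2 p (dil p b f) = norm2 p f"
  unfolding norm2_def using sum_dil[of p b "\<lambda>t. \<bar>t\<bar> ^ 2" f] by simp

lemma dil_nonneg:
  "prime (p::int) \<Longrightarrow> b \<in> Fp_star p \<Longrightarrow> (\<And>x. x \<in> Fp p \<Longrightarrow> 0 \<le> f x) \<Longrightarrow>
    x \<in> Fp p \<Longrightarrow> 0 \<le> dil p b f x"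
  unfolding dil_def using fdiv_correct(1) by blast

lemma dil_add: "dil p b (\<lambda>x. f x + g x) = (\<lambda>x. dil p b f x + dil p b g x)"
  unfolding dil_def by simp

lemma conv_add_left: "conv p (\<lambda>x. f x + g x) h = (\<lambda>x. conv p f h x + conv p g h x)"
  unfolding conv_def by (simp add: distrib_right sum.distrib)

lemma conv_add_right: "conv p h (\<lambda>x. f x + g x) = (\<lambda>x. conv p h f x + conv p h g x)"
  unfolding conv_def by (simp add: distrib_left sum.distrib)

lemma conv_nonneg:
  assumes "prime (p::int)" and "\<And>y. y \<in> Fp p \<Longrightarrow> 0 \<le> f y" and "\<And>y. y \<in> Fp p \<Longrightarrow> 0 \<le> g y"
  shows "0 \<le> conv p f g x"
  unfolding conv_def using assms mod_in_Fp by (intro sum_nonneg mult_nonneg_nonneg) auto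

text \<open>Young's inequality $\|f * g\|_2 \le \|f\|_1 \|g\|_2$, via Cauchy-Schwarz with weights $f$.\<close>

lemma norm2_conv_le_sum_left:
  assumes p: "prime (p::int)" and f: "\<And>y. y \<in> Fp p \<Longrightarrow> 0 \<le> f y"
  shows "norm2 p (conv p f g) \<le> (\<Sum>y\<in>Fp p. f y) * norm2 p g"
proof -
  define F where "F = (\<Sum>y\<in>Fp p. f y)"
  have pointwise: "(conv p f g x)\<^sup>2 \<le> F * (\<Sum>y\<in>Fp p. f y * (g ((x - y) mod p))\<^sup>2)" for x
  proof -
    have "(conv p f g x)\<^sup>2 = (\<Sum>y\<in>Fp p. sqrt (f y) * (sqrt (f y) * g ((x - y) mod p)))\<^sup>2"
      unfolding conv_def by (rule arg_cong[where f = "\<lambda>t. t\<^sup>2"], rule sum.cong) (auto simp: f)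
    also have "\<dots> \<le> (\<Sum>y\<in>Fp p. (sqrt (f y))\<^sup>2) * (\<Sum>y\<in>Fp p. (sqrt (f y) * g ((x - y) mod p))\<^sup>2)"
      by (rule Cauchy_Schwarz_ineq_sum)
    also have "\<dots> = F * (\<Sum>y\<in>Fp p. f y * (g ((x - y) mod p))\<^sup>2)"
      unfolding F_def using f by (simp add: power_mult_distrib)
    finally show ?thesis .
  qed
  have "(\<Sum>x\<in>Fp p. (conv p f g x)\<^sup>2) \<le> (\<Sum>x\<in>Fp p. F * (\<Sum>y\<in>Fp p. f y * (g ((x - y) mod p))\<^sup>2))"
    by (rule sum_mono) (rule pointwise)
  also have "\<dots> = F * (\<Sum>y\<in>Fp p. f y * (\<Sum>x\<in>Fp p. (g ((x - y) mod p))\<^sup>2))"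
    by (simp add: sum_distrib_left[symmetric] sum.swap[of _ "Fp p" "Fp p"])
  also have "\<dots> = F * (\<Sum>y\<in>Fp p. f y * (norm2 p g)\<^sup>2)"
    using sum_translate[OF p, of "\<lambda>t. (g t)\<^sup>2"] by (simp add: norm2_squared)
  also have "\<dots> = (F * norm2 p g)\<^sup>2"
    by (simp add: F_def power_mult_distrib power2_eq_square sum_distrib_right[symmetric])
  finally have "(\<Sum>x\<in>Fp p. (conv p f g x)\<^sup>2) \<le> (F * norm2 p g)\<^sup>2" .
  moreover have "0 \<le> F * norm2 p g" unfolding F_def using f by (simp add: sum_nonneg norm2_nonneg)
  ultimately show ?thesis unfolding F_def by (simp add: norm2_le_iff_squared_le)
qed

lemma norm2_conv_le_sum_right:
  assumes "prime (p::int)" and "\<And>y. y \<in> Fp p \<Longrightarrow> 0 \<le> g y"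
  shows "norm2 p (conv p f g) \<le> norm2 p f * (\<Sum>y\<in>Fp p. g y)"
  using norm2_conv_le_sum_left[OF assms, where g = f] conv_commute[OF assms(1), of f g]
  by (simp add: mult.commute)

lemma prob_measure_nonneg: "prob_measure p f \<Longrightarrow> x \<in> Fp p \<Longrightarrow> 0 \<le> f x"
  unfolding prob_measure_def by auto

lemma prob_measure_sum: "prob_measure p f \<Longrightarrow> (\<Sum>x\<in>Fp p. f x) = 1"
  unfolding prob_measure_def by auto

lemma prob_measure_le_1: "prob_measure p f \<Longrightarrow> x \<in> Fp p \<Longrightarrow> f x \<le> 1"
  using member_le_sum[of x "Fp p" f] by (auto simp: prob_measure_def)

lemma norm2_prob_measure_pos: "prob_measure p f \<Longrightarrow> 0 < norm2 p f"
proof -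
  assume f: "prob_measure p f"
  then obtain x where x: "x \<in> Fp p" "f x \<noteq> 0"
    using prob_measure_sum by (metis sum.neutral zero_neq_one)
  have "0 < (\<Sum>x\<in>Fp p. \<bar>f x\<bar> ^ 2)" by (rule sum_pos2[OF Fp_finite x(1)]) (use x in auto)
  then show ?thesis unfolding norm2_def by simp
qed

lemma prob_measure_weighted_sum_le:
  assumes lam: "prob_measure p lam" and S: "S \<subseteq> Fp p" and g: "\<And>b. b \<in> S \<Longrightarrow> g b \<le> B" and B: "0 \<le> B"
  shows "(\<Sum>b\<in>S. lam b * g b) \<le> B"
proof -
  have "(\<Sum>b\<in>S. lam b * g b) \<le> (\<Sum>b\<in>S. lam b * B)"
    using S g prob_measure_nonneg[OF lam] by (intro sum_mono mult_left_mono) auto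
  also have "\<dots> \<le> (\<Sum>b\<in>Fp p. lam b) * B"
    unfolding sum_distrib_right[symmetric]
    using S B prob_measure_nonneg[OF lam] by (intro mult_right_mono sum_mono2) auto
  finally show ?thesis using prob_measure_sum[OF lam] by simp
qed

section \<open>Additive energy\<close>

definition representations :: "int \<Rightarrow> int set \<Rightarrow> int set \<Rightarrow> int \<Rightarrow> nat" where
  "representations p A C x = card {(a, c) \<in> A \<times> C. (a + c) mod p = x}"

lemma sum_representations_squared_le_energy:
  assumes A: "finite A" and C: "finite C" and X: "finite X"
  shows "(\<Sum>x\<in>X. (real (representations p A C x))\<^sup>2) \<le> real (add_energy p A C)"
proof -
  define R where "R x = {(a, c) \<in> A \<times> C. (a + c) mod p = x}" for x
  define E where "E = {(a1, b1, a2, b2). a1 \<in> A \<and> b1 \<in> C \<and> a2 \<in> A \<and> b2 \<in> C \<and>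
      (a1 + b1) mod p = (a2 + b2) mod p}"
  define forget where "forget = (\<lambda>(x::int, (a1::int, c1::int), (a2::int, c2::int)). (a1, c1, a2, c2))"
  have "E \<subseteq> A \<times> C \<times> A \<times> C" unfolding E_def by auto
  then have finE: "finite E" using A C finite_subset by blast
  have finR: "finite (R x)" for x
    using finite_subset[of "R x" "A \<times> C"] A C unfolding R_def by auto
  have "inj_on forget (Sigma X (\<lambda>x. R x \<times> R x))"
    by (rule inj_onI) (auto simp: forget_def R_def)
  moreover have "forget ` Sigma X (\<lambda>x. R x \<times> R x) \<subseteq> E"
    by (auto simp: forget_def R_def E_def)
  ultimately have "card (Sigma X (\<lambda>x. R x \<times> R x)) \<le> card E"
    using finE by (intro card_inj_on_le)
  moreover have "card (Sigma X (\<lambda>x. R x \<times> R x)) = (\<Sum>x\<in>X. card (R x) * card (R x))"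
    using X finR by (simp add: card_SigmaI card_cartesian_product)
  ultimately show ?thesis
    unfolding representations_def add_energy_def E_def[symmetric] R_def[symmetric]
    by (simp add: power2_eq_square flip: of_nat_sum of_nat_mult)
qed

lemma sum_representations_sumset:
  assumes "finite A" and "finite C"
  shows "(\<Sum>x\<in>(\<lambda>(a, c). (a + c) mod p) ` (A \<times> C). real (representations p A C x))
      = real (card A) * real (card C)"
proof -
  have "(\<Sum>x\<in>(\<lambda>(a, c). (a + c) mod p) ` (A \<times> C). (\<Sum>y\<in>{y \<in> A \<times> C. (\<lambda>(a, c). (a + c) mod p) y = x}. 1))
      = (\<Sum>y\<in>A \<times> C. (1::real))"
    by (rule sum.group) (use assms in auto)
  moreover have "{(a, c) \<in> A \<times> C. (a + c) mod p = x} = {y \<in> A \<times> C. (\<lambda>(a, c). (a + c) mod p) y = x}"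
    for x by auto
  ultimately show ?thesis by (simp add: representations_def card_cartesian_product)
qed

lemma energy_ge_card_sumset:
  assumes A: "finite A" and C: "finite C"
  shows "(real (card A) * real (card C))\<^sup>2
     \<le> real (add_energy p A C) * real (card ((\<lambda>(a, c). (a + c) mod p) ` (A \<times> C)))"
proof -
  define S where "S = (\<lambda>(a, c). (a + c) mod p) ` (A \<times> C)"
  define r where "r x = real (representations p A C x)" for x
  have "(\<Sum>x\<in>S. 1 * r x)\<^sup>2 \<le> (\<Sum>x\<in>S. 1\<^sup>2) * (\<Sum>x\<in>S. (r x)\<^sup>2)"
    by (rule Cauchy_Schwarz_ineq_sum)
  also have "\<dots> \<le> real (card S) * real (add_energy p A C)"
    unfolding r_def using sum_representations_squared_le_energy[OF A C, of S] A C S_def by (simp add: mult_left_mono)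
  finally show ?thesis
    using sum_representations_sumset[OF A C, of p] unfolding S_def r_def by (simp add: mult.commute)
qed

lemma representations_dilset:
  assumes p: "prime (p::int)" and b: "b \<in> Fp_star p" and D: "D \<subseteq> Fp p" and x: "x \<in> Fp p"
  shows "card {y \<in> D. fdiv p ((x - y) mod p) b \<in> D} = representations p D (dilset p b D) x"
  unfolding representations_def
proof (rule bij_betw_same_card[where f = "\<lambda>y. (y, (x - y) mod p)"], rule bij_betw_byWitness[where f' = fst])
  show "\<forall>y\<in>{y \<in> D. fdiv p ((x - y) mod p) b \<in> D}. fst (y, (x - y) mod p) = y" by simp
  show "\<forall>z\<in>{(a, c) \<in> D \<times> dilset p b D. (a + c) mod p = x}. (fst z, (x - fst z) mod p) = z"
    using x by (auto simp: mod_eq_self_Fp mod_diff_left_eq dest: subsetD[OF dilset_subset_Fp[OF p]])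
  show "(\<lambda>y. (y, (x - y) mod p)) ` {y \<in> D. fdiv p ((x - y) mod p) b \<in> D}
      \<subseteq> {(a, c) \<in> D \<times> dilset p b D. (a + c) mod p = x}"
    using x mem_dilset_iff[OF p b D mod_in_Fp[OF p]] by (auto simp: mod_add_right_eq mod_eq_self_Fp)
  show "fst ` {(a, c) \<in> D \<times> dilset p b D. (a + c) mod p = x} \<subseteq> {y \<in> D. fdiv p ((x - y) mod p) b \<in> D}"
    using x mem_dilset_iff[OF p b D] dilset_subset_Fp[OF p]
    by (force simp: mod_eq_self_Fp mod_diff_left_eq)
qed

lemma mult_le_indicator_mult:
  fixes u v T :: real
  assumes "0 \<le> u" "u \<le> (if P then T else 0)" "0 \<le> v" "v \<le> (if Q then T else 0)"
  shows "u * v \<le> (if P \<and> Q then T\<^sup>2 else 0)"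
  using assms mult_mono[of u T v T] by (auto simp: power2_eq_square split: if_splits)

lemma conv_dil_le_representations:
  assumes p: "prime (p::int)" and b: "b \<in> Fp_star p" and D: "D \<subseteq> Fp p" and x: "x \<in> Fp p"
    and f: "\<And>x. x \<in> Fp p \<Longrightarrow> 0 \<le> f x \<and> f x \<le> (if x \<in> D then T else 0)"
    and g: "\<And>x. x \<in> Fp p \<Longrightarrow> 0 \<le> g x \<and> g x \<le> (if x \<in> D then T else 0)"
  shows "conv p f (dil p b g) x \<le> T\<^sup>2 * real (representations p D (dilset p b D) x)"
proof -
  have "conv p f (dil p b g) x
      \<le> (\<Sum>y\<in>Fp p. if y \<in> D \<and> fdiv p ((x - y) mod p) b \<in> D then T\<^sup>2 else 0)"
    unfolding conv_def dil_def
    using f g[OF fdiv_correct(1)[OF p b]] by (intro sum_mono mult_le_indicator_mult) blast+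
  also have "\<dots> = (\<Sum>y\<in>{y \<in> Fp p. y \<in> D \<and> fdiv p ((x - y) mod p) b \<in> D}. T\<^sup>2)"
    by (rule sum.inter_filter[symmetric]) simp
  also have "{y \<in> Fp p. y \<in> D \<and> fdiv p ((x - y) mod p) b \<in> D} = {y \<in> D. fdiv p ((x - y) mod p) b \<in> D}"
    using D by auto
  finally show ?thesis using representations_dilset[OF p b D x] by (simp add: mult.commute)
qed

lemma norm2_conv_dil_le_energy:
  assumes p: "prime (p::int)" and b: "b \<in> Fp_star p" and D: "D \<subseteq> Fp p" and T: "0 \<le> T"
    and f: "\<And>x. x \<in> Fp p \<Longrightarrow> 0 \<le> f x \<and> f x \<le> (if x \<in> D then T else 0)"
    and g: "\<And>x. x \<in> Fp p \<Longrightarrow> 0 \<le> g x \<and> g x \<le> (if x \<in> D then T else 0)"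
  shows "norm2 p (conv p f (dil p b g)) \<le> T\<^sup>2 * sqrt (real (add_energy p D (dilset p b D)))"
proof -
  define r where "r x = real (representations p D (dilset p b D) x)" for x
  have "0 \<le> conv p f (dil p b g) x" if "x \<in> Fp p" for x
    by (rule conv_nonneg[OF p]) (use f g dil_nonneg[OF p b] in \<open>simp_all\<close>)
  then have "norm2 p (conv p f (dil p b g)) \<le> norm2 p (\<lambda>x. T\<^sup>2 * r x)"
    using conv_dil_le_representations[OF p b D _ f g] unfolding r_def by (intro norm2_mono) simp
  also have "\<dots> = T\<^sup>2 * sqrt (\<Sum>x\<in>Fp p. (r x)\<^sup>2)"
    by (simp only: norm2_const_mult[OF zero_le_power2]) (simp add: norm2_def)
  also have "\<dots> \<le> T\<^sup>2 * sqrt (real (add_energy p D (dilset p b D)))"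
    unfolding r_def using finite_subset[OF D] finite_subset[OF dilset_subset_Fp[OF p]]
    by (intro mult_left_mono real_sqrt_le_mono sum_representations_squared_le_energy) simp_all
  finally show ?thesis .
qed

lemma energy_initial_segment_dilset_ge:
  assumes p: "prime (p::int)" and k: "1 \<le> k" "int k < p" and b: "1 \<le> b" "b \<le> int k"
  shows "real k ^ 3 \<le> real (add_energy p {0..<int k} (dilset p b {0..<int k})) * real_of_int (b + 1)"
proof -
  define A where "A = {0..<int k}"
  define S where "S = (\<lambda>(a, c). (a + c) mod p) ` (A \<times> dilset p b A)"
  have A: "A \<subseteq> Fp p" unfolding A_def Fp_def using k by auto
  have bF: "b \<in> Fp_star p" unfolding Fp_star_def Fp_def using b k by auto
  have cA: "card A = k" unfolding A_def by simp
  have cC: "card (dilset p b A) = k" using card_dilset[OF p bF A] cA by simp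
  have S: "S \<subseteq> (\<lambda>n. n mod p) ` {0..<int k * (b + 1)}"
  proof
    fix s assume "s \<in> S"
    then obtain a a' where a: "a \<in> A" "a' \<in> A" and s: "s = (a + (b * a') mod p) mod p"
      unfolding S_def dilset_def by auto
    have r: "0 \<le> a" "a \<le> int k - 1" "0 \<le> a'" "a' \<le> int k - 1" using a unfolding A_def by auto
    have "b * a' \<le> b * (int k - 1)" using r b by (intro mult_left_mono) auto
    then have "a + b * a' \<le> (int k - 1) + b * (int k - 1)" using r by linarith
    also have "\<dots> < int k * (b + 1)" using b by (simp add: algebra_simps)
    finally have "a + b * a' < int k * (b + 1)" .
    moreover have "0 \<le> a + b * a'" using r b by simp
    ultimately show "s \<in> (\<lambda>n. n mod p) ` {0..<int k * (b + 1)}"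
      using s by (auto simp: mod_add_right_eq)
  qed
  have "card S \<le> card {0..<int k * (b + 1)}"
    using card_image_le[OF finite_atLeastLessThan_int, of "\<lambda>n. n mod p" 0 "int k * (b + 1)"]
      card_mono[OF finite_imageI[OF finite_atLeastLessThan_int] S] by linarith
  then have "int (card S) \<le> int k * (b + 1)" using b by (simp add: le_nat_iff)
  then have "real_of_int (int (card S)) \<le> real_of_int (int k * (b + 1))" by (simp only: of_int_le_iff)
  then have cS: "real (card S) \<le> real k * real_of_int (b + 1)" by simp
  have "real k * real k ^ 3 = (real k * real k)\<^sup>2" by (simp add: power2_eq_square power3_eq_cube)
  also have "\<dots> \<le> real (add_energy p A (dilset p b A)) * real (card S)"
    using energy_ge_card_sumset[of A "dilset p b A" p] cA cC finite_subset[OF dilset_subset_Fp[OF p]]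
    unfolding S_def A_def by simp
  also have "\<dots> \<le> real (add_energy p A (dilset p b A)) * (real k * real_of_int (b + 1))"
    using cS by (intro mult_left_mono) auto
  finally have "real k * real k ^ 3 \<le> real k * (real (add_energy p A (dilset p b A)) * real_of_int (b + 1))"
    by (simp only: mult_ac)
  moreover have "0 < real k" using k by simp
  ultimately show ?thesis unfolding A_def by (simp only: mult_le_cancel_left_pos)
qed

definition bourgain_bound_on :: "real \<Rightarrow> real \<Rightarrow> int \<Rightarrow> int set \<Rightarrow> (int \<Rightarrow> real) \<Rightarrow> bool" where
  "bourgain_bound_on c K p D E \<longleftrightarrow> (\<forall>B. B \<subseteq> Fp_star p \<and> B \<noteq> {} \<and> card B \<le> card D \<longrightarrow>
      (\<Sum>b\<in>B. E b) \<le> K * (min (real_of_int p / real (card D)) (real (card B))) powr (- c)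
            * real (card D) ^ 3 * real (card B))"

lemma bourgain_bound_onD:
  assumes "bourgain_bound_on c K p D E" and "B \<subseteq> Fp_star p" "B \<noteq> {}" "card B \<le> card D"
  shows "(\<Sum>b\<in>B. E b) \<le> K * (min (real_of_int p / real (card D)) (real (card B))) powr (- c)
      * real (card D) ^ 3 * real (card B)"
  using assms unfolding bourgain_bound_on_def by simp

lemma bourgain_energy_obtains_constant:
  assumes "bourgain_energy c"
  obtains K where "0 \<le> K"
    and "\<And>p D. prime p \<Longrightarrow> D \<subseteq> Fp p \<Longrightarrow> bourgain_bound_on c K p D (\<lambda>b. real (add_energy p D (dilset p b D)))"
proof -
  obtain K where K: "\<forall>p A B. prime p \<and> A \<subseteq> Fp p \<and> B \<subseteq> Fp_star p \<and> B \<noteq> {} \<and> card B \<le> card A \<longrightarrow>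
      real (\<Sum>b\<in>B. add_energy p A (dilset p b A))
        \<le> K * (min (real_of_int p / real (card A)) (real (card B))) powr (- c)
            * real (card A) ^ 3 * real (card B)"
    using assms unfolding bourgain_energy_def by blast
  have "bourgain_bound_on c (max K 0) p D (\<lambda>b. real (add_energy p D (dilset p b D)))"
    if "prime p" "D \<subseteq> Fp p" for p D
    unfolding bourgain_bound_on_def
  proof (intro allI impI)
    fix B assume B: "B \<subseteq> Fp_star p \<and> B \<noteq> {} \<and> card B \<le> card D"
    have "(\<Sum>b\<in>B. real (add_energy p D (dilset p b D)))
        \<le> K * (min (real_of_int p / real (card D)) (real (card B))) powr (- c) * real (card D) ^ 3 * real (card B)"
      using K that B by (simp flip: of_nat_sum)
    also have "\<dots> \<le> max K 0 * (min (real_of_int p / real (card D)) (real (card B))) powr (- c)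
        * real (card D) ^ 3 * real (card B)"
      by (intro mult_right_mono) auto
    finally show "(\<Sum>b\<in>B. real (add_energy p D (dilset p b D)))
        \<le> max K 0 * (min (real_of_int p / real (card D)) (real (card B))) powr (- c)
          * real (card D) ^ 3 * real (card B)" .
  qed
  then show thesis using that[of "max K 0"] by simp
qed

lemma sum_inverse_Suc_eq_harm: "(\<Sum>j\<in>{1..k}. 1 / (real j + 1)) = harm (k + 1) - 1"
  by (induction k) (simp_all add: harm_def inverse_eq_divide)

lemma energy_initial_segment_sum_ge:
  assumes p: "prime (p::int)" and k: "1 \<le> k" and kp: "int k < p"
  shows "real k ^ 3 * (harm (k + 1) - 1)
    \<le> (\<Sum>b\<in>int ` {1..k}. real (add_energy p {0..<int k} (dilset p b {0..<int k})))"
proof -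
  have "real k ^ 3 * (harm (k + 1) - 1) = real k ^ 3 * (\<Sum>j\<in>{1..k}. 1 / (real j + 1))"
    by (simp only: sum_inverse_Suc_eq_harm)
  also have "\<dots> = (\<Sum>j\<in>{1..k}. real k ^ 3 / real_of_int (int j + 1))"
    by (simp add: sum_distrib_left)
  also have "\<dots> \<le> (\<Sum>j\<in>{1..k}. real (add_energy p {0..<int k} (dilset p (int j) {0..<int k})))"
  proof (rule sum_mono)
    fix j assume "j \<in> {1..k}"
    then have "real k ^ 3 \<le> real (add_energy p {0..<int k} (dilset p (int j) {0..<int k}))
        * real_of_int (int j + 1)"
      by (intro energy_initial_segment_dilset_ge[OF p k(1) kp]) auto
    then show "real k ^ 3 / real_of_int (int j + 1)
        \<le> real (add_energy p {0..<int k} (dilset p (int j) {0..<int k}))"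
      by (simp add: pos_divide_le_eq add_pos_nonneg)
  qed
  also have "\<dots> = (\<Sum>b\<in>int ` {1..k}. real (add_energy p {0..<int k} (dilset p b {0..<int k})))"
    by (rule sum.reindex_cong[where l = int, symmetric]) (simp_all add: inj_on_def)
  finally show ?thesis .
qed

text \<open>Bourgain's estimate cannot hold with an exponent $c_0 \geq 1$: for an interval $A$ and
  dilations $B = \{1, \ldots, |A|\}$ the energies $E(A, bA) \gg |A|^3/b$ sum to $|A|^3 \log |A|$.\<close>

lemma bourgain_energy_exponent_lt_1:
  assumes "bourgain_energy c"
  shows "c < 1"
proof (rule ccontr)
  assume "\<not> c < 1"
  obtain K where K0: "0 \<le> K"
    and K: "\<And>p D. prime p \<Longrightarrow> D \<subseteq> Fp p \<Longrightarrow> bourgain_bound_on c K p D (\<lambda>b. real (add_energy p D (dilset p b D)))"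
    using bourgain_energy_obtains_constant[OF assms] by blast
  have "eventually (\<lambda>n. K + 2 \<le> harm n) sequentially"
    using harm_at_top by (simp add: filterlim_at_top)
  then obtain N where N: "\<And>n. N \<le> n \<Longrightarrow> K + 2 \<le> harm n" unfolding eventually_sequentially by blast
  define k where "k = N + 1"
  obtain q :: nat where q: "prime q" "k * k + k < q" using bigger_prime by blast
  define p where "p = int q"
  have "k * k \<le> q" "k < q" using q(2) by auto
  then have p: "prime p" and kp: "int k * int k \<le> p" and "int k < p"
    using q(1) unfolding p_def by (simp_all flip: of_nat_mult)
  define A where "A = {0..<int k}"
  define B where "B = int ` {1..k}"
  have A: "A \<subseteq> Fp p" and cA: "card A = k" unfolding A_def Fp_def using \<open>int k < p\<close> by auto
  have B: "B \<subseteq> Fp_star p" and cB: "card B = k" and "B \<noteq> {}"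
    unfolding B_def Fp_star_def Fp_def using \<open>int k < p\<close> k_def by (auto simp: card_image)
  have "real_of_int (int k * int k) \<le> real_of_int p" using kp by (simp only: of_int_le_iff)
  then have "real k * real k \<le> real_of_int p" by simp
  then have min: "min (real_of_int p / real k) (real k) = real k" using k_def by (simp add: field_simps)
  have "real k ^ 3 * (harm (k + 1) - 1) \<le> (\<Sum>b\<in>B. real (add_energy p A (dilset p b A)))"
    unfolding A_def B_def using energy_initial_segment_sum_ge[OF p _ \<open>int k < p\<close>] k_def by simp
  also have "\<dots> \<le> K * (min (real_of_int p / real (card A)) (real (card B))) powr (- c)
      * real (card A) ^ 3 * real (card B)"
    using bourgain_bound_onD[OF K[OF p A] B \<open>B \<noteq> {}\<close>] cA cB by simp
  also have "\<dots> = K * real k powr (- c) * real k ^ 3 * real k" using cA cB min by simp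
  also have "\<dots> = K * real k ^ 3 * (real k powr (- c) * real k)" by (simp only: mult_ac)
  also have "\<dots> \<le> K * real k ^ 3 * 1"
  proof (intro mult_left_mono)
    have "real k powr (- c) \<le> real k powr (- 1)" using \<open>\<not> c < 1\<close> k_def by (intro powr_mono) auto
    then show "real k powr (- c) * real k \<le> 1" using k_def by (simp add: powr_minus_divide pos_le_divide_eq)
  qed (use K0 in simp)
  finally have "harm (k + 1) - 1 \<le> K" using k_def by simp
  then show False using N[of "k + 1"] k_def by simp
qed

section \<open>Dyadic decompositions\<close>

lemma sum_le_by_chunks:
  fixes f :: "'a \<Rightarrow> real"
  assumes "finite B" "1 \<le> d" "d \<le> card B" "\<And>x. x \<in> B \<Longrightarrow> 0 \<le> f x"
    and chunk: "\<And>S. S \<subseteq> B \<Longrightarrow> card S = d \<Longrightarrow> sum f S \<le> V"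
  shows "sum f B \<le> 2 * real (card B) / real d * V"
  using assms
proof (induction "card B" arbitrary: B rule: less_induct)
  case less
  obtain S1 where S1: "S1 \<subseteq> B" "card S1 = d"
    using obtain_subset_with_card_n[OF less.prems(3)] by metis
  have V0: "0 \<le> V"
    using less.prems(5)[OF S1] sum_nonneg[of S1 f] less.prems(4) S1(1) by force
  have split: "sum f B = sum f S1 + sum f (B - S1)"
    using S1 less.prems(1) by (metis add.commute sum.subset_diff)
  have cB: "card (B - S1) = card B - d"
    using S1 less.prems(1) by (simp add: card_Diff_subset finite_subset)
  show ?case
  proof (cases "card B < 2 * d")
    case True
    then have "card (B - S1) \<le> d" using cB by linarith
    then obtain S2 where S2: "B - S1 \<subseteq> S2" "S2 \<subseteq> B" "card S2 = d"
      using exists_subset_between[OF _ less.prems(3) Diff_subset less.prems(1)] by blast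
    have "sum f (B - S1) \<le> sum f S2"
      by (rule sum_mono2) (use S2 less.prems(1,4) finite_subset in auto)
    then have "sum f B \<le> 2 * V" using split less.prems(5)[OF S1] less.prems(5)[OF S2(2,3)] by linarith
    also have "\<dots> \<le> 2 * real (card B) / real d * V"
      using less.prems(2,3) V0 by (intro mult_right_mono) (auto simp: field_simps)
    finally show ?thesis .
  next
    case False
    have "sum f (B - S1) \<le> 2 * real (card (B - S1)) / real d * V"
    proof (rule less.hyps)
      show "card (B - S1) < card B" and "d \<le> card (B - S1)" using cB False less.prems(2,3) by auto
      show "sum f S \<le> V" if "S \<subseteq> B - S1" "card S = d" for S
        using less.prems(5) that by blast
    qed (use less.prems in auto)
    then have "sum f B \<le> V + 2 * real (card B - d) / real d * V"
      using split less.prems(5)[OF S1] cB by simp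
    also have "\<dots> = (2 * real (card B) / real d - 1) * V"
      using less.prems(2,3) by (simp add: field_simps of_nat_diff)
    also have "\<dots> \<le> 2 * real (card B) / real d * V" using V0 by (simp add: algebra_simps)
    finally show ?thesis .
  qed
qed

lemma sum_power_le_geometric_top:
  fixes r :: real
  assumes "1 < r" and "S \<subseteq> {..m}"
  shows "(\<Sum>k\<in>S. r ^ k) \<le> r ^ Suc m / (r - 1)"
proof -
  have "(\<Sum>k\<in>S. r ^ k) \<le> (\<Sum>k<Suc m. r ^ k)"
    by (rule sum_mono2) (use assms in auto)
  also have "\<dots> = (r ^ Suc m - 1) / (r - 1)" by (rule geometric_sum) (use assms in simp)
  also have "\<dots> \<le> r ^ Suc m / (r - 1)" using assms by (simp add: divide_right_mono)
  finally show ?thesis .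
qed

lemma sum_power_le_geometric_tail:
  fixes \<rho> :: real
  assumes "0 \<le> \<rho>" "\<rho> < 1" and "finite S" and "S \<subseteq> {m..}"
  shows "(\<Sum>k\<in>S. \<rho> ^ k) \<le> \<rho> ^ m / (1 - \<rho>)"
proof -
  obtain n where "S \<subseteq> {..<n}" using finite_nat_bounded[OF assms(3)] by blast
  then have "S \<subseteq> {0 + m..<n + m}" using assms(4) by force
  then have "(\<Sum>k\<in>S. \<rho> ^ k) \<le> (\<Sum>k\<in>{0 + m..<n + m}. \<rho> ^ k)"
    by (intro sum_mono2) (use assms in auto)
  also have "\<dots> = (\<Sum>i\<in>{0..<n}. \<rho> ^ (i + m))" by (rule sum.shift_bounds_nat_ivl)
  also have "\<dots> = \<rho> ^ m * (\<Sum>i<n. \<rho> ^ i)"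
    by (simp add: power_add sum_distrib_left atLeast0LessThan mult.commute)
  also have "(\<Sum>i<n. \<rho> ^ i) = (1 - \<rho> ^ n) / (1 - \<rho>)"
    using geometric_sum[of \<rho> n] assms by (simp add: field_simps)
  also have "\<rho> ^ m * ((1 - \<rho> ^ n) / (1 - \<rho>)) \<le> \<rho> ^ m * (1 / (1 - \<rho>))"
    using assms by (intro mult_left_mono divide_right_mono) auto
  finally show ?thesis by simp
qed

definition dyadic_level :: "real \<Rightarrow> nat" where
  "dyadic_level x = nat \<lfloor>log 2 (1 / x)\<rfloor>"

lemma dyadic_level_bounds:
  fixes x :: real
  assumes "0 < x" "x \<le> 1"
  shows "x \<le> 1 / 2 ^ dyadic_level x" and "1 / 2 ^ (dyadic_level x + 1) < x"
proof -
  define k where "k = dyadic_level x"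
  have "0 \<le> log 2 (1 / x)" using assms by simp
  then have "real k \<le> log 2 (1 / x)" and "log 2 (1 / x) < real k + 1"
    unfolding k_def dyadic_level_def by linarith+
  then have "2 powr real k \<le> 1 / x" and "1 / x < 2 powr (real k + 1)"
    using assms le_log_iff[of 2 "1 / x"] log_less_iff[of 2 "1 / x"] by auto
  moreover have "(2::real) powr (real k + 1) = 2 ^ (k + 1)" using powr_realpow[of 2 "k + 1"] by (simp add: add.commute)
  ultimately have "2 ^ k \<le> 1 / x" and "1 / x < 2 ^ (k + 1)" by (simp_all add: powr_realpow)
  then show "x \<le> 1 / 2 ^ dyadic_level x" and "1 / 2 ^ (dyadic_level x + 1) < x"
    unfolding k_def[symmetric] using assms by (simp_all add: field_simps)
qed

definition dyadic_constant :: "real \<Rightarrow> real" where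
  "dyadic_constant c = 4 * 2 powr (1 - c) / (2 powr (1 - c) - 1) + 2 / (1 - 2 powr (- c / 2))"

lemma dyadic_constant_pos: "0 < c \<Longrightarrow> c < 1 \<Longrightarrow> 0 < dyadic_constant c"
  unfolding dyadic_constant_def using powr_less_mono[of "- c / 2" 0 "2::real"]
  by (intro add_pos_pos divide_pos_pos) auto

lemma dyadic_term_le_growing:
  fixes c L s :: real
  assumes c: "0 < c" "c < 1" and L: "0 < L" and s: "0 \<le> s" "s \<le> 4 ^ (k + 1) * L"
  shows "s powr (1 - c / 2) / 2 ^ k \<le> 4 * L powr (1 - c / 2) * (2 powr (1 - c)) ^ k"
proof -
  define \<gamma> where "\<gamma> = 1 - c / 2"
  have \<gamma>: "0 < \<gamma>" "\<gamma> \<le> 1" unfolding \<gamma>_def using c by auto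
  have "(4::real) ^ (k + 1) = 4 * 2 powr (2 * real k)"
    by (simp add: powr_realpow[symmetric] powr_powr[symmetric] power_mult[symmetric] flip: powr_realpow)
  then have "s powr \<gamma> \<le> 4 powr \<gamma> * 2 powr (2 * real k * \<gamma>) * L powr \<gamma>"
    using powr_mono2[of \<gamma> s "4 ^ (k + 1) * L"] s \<gamma> L by (simp add: powr_mult powr_powr mult.assoc)
  also have "\<dots> \<le> 4 * 2 powr (2 * real k * \<gamma>) * L powr \<gamma>"
    using powr_mono[of \<gamma> 1 "4::real"] \<gamma> by (intro mult_right_mono) auto
  finally have "s powr \<gamma> / 2 ^ k \<le> 4 * 2 powr (2 * real k * \<gamma>) * L powr \<gamma> / 2 ^ k"
    by (simp add: divide_right_mono)
  also have "\<dots> = 4 * L powr \<gamma> * (2 powr (2 * real k * \<gamma>) / 2 powr real k)"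
    by (simp add: powr_realpow)
  also have "2 powr (2 * real k * \<gamma>) / 2 powr real k = (2 powr (1 - c)) ^ k"
    by (simp add: powr_diff[symmetric] powr_power \<gamma>_def algebra_simps)
  finally show ?thesis unfolding \<gamma>_def .
qed

lemma dyadic_term_le_decaying:
  fixes c s :: real
  assumes c: "0 < c" "c < 1" and s: "0 \<le> s" "s \<le> 2 ^ (k + 1)"
  shows "s powr (1 - c / 2) / 2 ^ k \<le> 2 * (2 powr (- c / 2)) ^ k"
proof -
  define \<gamma> where "\<gamma> = 1 - c / 2"
  have \<gamma>: "0 < \<gamma>" "\<gamma> \<le> 1" unfolding \<gamma>_def using c by auto
  have "s powr \<gamma> \<le> (2 ^ (k + 1)) powr \<gamma>" using s \<gamma> by (intro powr_mono2) auto
  also have "\<dots> = 2 powr \<gamma> * 2 powr (real k * \<gamma>)"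
  proof -
    have "(2::real) ^ (k + 1) = 2 powr (real k + 1)"
      using powr_realpow[of 2 "k + 1"] by (simp add: add.commute)
    then show ?thesis by (simp add: powr_powr flip: powr_add) (simp add: algebra_simps)
  qed
  also have "\<dots> \<le> 2 * 2 powr (real k * \<gamma>)"
    using powr_mono[of \<gamma> 1 "2::real"] \<gamma> by (intro mult_right_mono) auto
  finally have "s powr \<gamma> / 2 ^ k \<le> 2 * 2 powr (real k * \<gamma>) / 2 ^ k"
    by (simp add: divide_right_mono)
  also have "\<dots> = 2 * (2 powr (real k * \<gamma>) / 2 powr real k)"
    by (simp add: powr_realpow)
  also have "2 powr (real k * \<gamma>) / 2 powr real k = (2 powr (- c / 2)) ^ k"
    by (simp add: powr_diff[symmetric] powr_power \<gamma>_def algebra_simps)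
  finally show ?thesis unfolding \<gamma>_def .
qed

text \<open>Levels below the level of $L$ are controlled by the growing bound, those above by the
  decaying one; both geometric sums end at level $\log_2(1/L)$, where they are $\ll L^{c/2}$.\<close>

lemma sum_dyadic_terms_le:
  fixes c L :: real and s :: "nat \<Rightarrow> real"
  assumes c: "0 < c" "c < 1" and L: "0 < L" "L \<le> 1" and T: "finite T"
    and s: "\<And>k. k \<in> T \<Longrightarrow> 0 \<le> s k \<and> s k \<le> 2 ^ (k + 1) \<and> s k \<le> 4 ^ (k + 1) * L"
  shows "(\<Sum>k\<in>T. s k powr (1 - c / 2) / 2 ^ k) \<le> dyadic_constant c * L powr (c / 2)"
proof -
  define r where "r = (2::real) powr (1 - c)"
  define \<rho> where "\<rho> = (2::real) powr (- c / 2)"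
  define m where "m = dyadic_level L"
  have r: "1 < r" unfolding r_def using c by simp
  have \<rho>: "0 \<le> \<rho>" "\<rho> < 1" unfolding \<rho>_def using c powr_less_mono[of "- c / 2" 0 "2::real"] by auto
  have m: "2 ^ m \<le> 1 / L" "1 / L < 2 ^ (m + 1)"
    using dyadic_level_bounds[OF L] L unfolding m_def by (simp_all add: field_simps)
  have "(\<Sum>k\<in>T \<inter> {..m}. s k powr (1 - c / 2) / 2 ^ k) \<le> (\<Sum>k\<in>T \<inter> {..m}. 4 * L powr (1 - c / 2) * r ^ k)"
    using dyadic_term_le_growing[OF c L(1)] s unfolding r_def by (intro sum_mono) auto
  also have "\<dots> \<le> 4 * L powr (1 - c / 2) * (r ^ Suc m / (r - 1))"
    unfolding sum_distrib_left[symmetric] by (intro mult_left_mono sum_power_le_geometric_top r) auto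
  also have "r ^ Suc m = r * (2 ^ m) powr (1 - c)"
    unfolding r_def by (simp add: powr_power powr_realpow[symmetric] powr_powr mult.commute)
  also have "4 * L powr (1 - c / 2) * (r * (2 ^ m) powr (1 - c) / (r - 1))
      \<le> 4 * L powr (1 - c / 2) * (r * (1 / L) powr (1 - c) / (r - 1))"
    using m r c by (intro mult_left_mono divide_right_mono powr_mono2) auto
  also have "\<dots> = 4 * r / (r - 1) * (L powr (1 - c / 2) * (1 / L) powr (1 - c))"
    by (simp add: field_simps)
  also have "L powr (1 - c / 2) * (1 / L) powr (1 - c) = L powr (c / 2)"
    using L by (simp add: powr_divide powr_diff[symmetric] field_simps)
  finally have low: "(\<Sum>k\<in>T \<inter> {..m}. s k powr (1 - c / 2) / 2 ^ k) \<le> 4 * r / (r - 1) * L powr (c / 2)" .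
  have "(\<Sum>k\<in>T - {..m}. s k powr (1 - c / 2) / 2 ^ k) \<le> (\<Sum>k\<in>T - {..m}. 2 * \<rho> ^ k)"
    using dyadic_term_le_decaying[OF c] s unfolding \<rho>_def by (intro sum_mono) auto
  also have "\<dots> \<le> 2 * (\<rho> ^ Suc m / (1 - \<rho>))"
    unfolding sum_distrib_left[symmetric] using T
    by (intro mult_left_mono sum_power_le_geometric_tail \<rho>) (auto simp: Suc_le_eq)
  also have "\<rho> ^ Suc m = (2 powr real (m + 1)) powr (- c / 2)"
    unfolding \<rho>_def powr_powr by (subst powr_power) simp_all
  also have "(2::real) powr real (m + 1) = 2 ^ (m + 1)" by (rule powr_realpow) simp
  also have "(2 ^ (m + 1)) powr (- c / 2) \<le> (1 / L) powr (- c / 2)"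
    using m L c by (intro powr_mono2') auto
  also have "\<dots> = L powr (c / 2)" using L by (simp add: powr_divide powr_minus_divide)
  finally have high: "(\<Sum>k\<in>T - {..m}. s k powr (1 - c / 2) / 2 ^ k) \<le> 2 / (1 - \<rho>) * L powr (c / 2)"
    using \<rho> by (simp add: divide_right_mono)
  have "(\<Sum>k\<in>T. s k powr (1 - c / 2) / 2 ^ k)
      = (\<Sum>k\<in>T \<inter> {..m}. s k powr (1 - c / 2) / 2 ^ k) + (\<Sum>k\<in>T - {..m}. s k powr (1 - c / 2) / 2 ^ k)"
    by (rule sum.Int_Diff[OF T])
  also have "\<dots> \<le> 4 * r / (r - 1) * L powr (c / 2) + 2 / (1 - \<rho>) * L powr (c / 2)"
    using low high by (rule add_mono)
  also have "\<dots> = dyadic_constant c * L powr (c / 2)"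
    unfolding dyadic_constant_def r_def \<rho>_def by (simp add: algebra_simps)
  finally show ?thesis .
qed

lemma card_le_of_weights_above:
  fixes w :: "'a \<Rightarrow> real"
  assumes "finite S" and "\<And>b. b \<in> S \<Longrightarrow> 1 / 2 ^ (k + 1) < w b"
  shows "real (card S) \<le> 2 ^ (k + 1) * sum w S"
    and "real (card S) \<le> 4 ^ (k + 1) * (\<Sum>b\<in>S. (w b)\<^sup>2)"
proof -
  have "real (card S) / 2 ^ (k + 1) = (\<Sum>b\<in>S. 1 / 2 ^ (k + 1))" by simp
  also have "\<dots> \<le> sum w S" using assms(2) by (intro sum_mono less_imp_le) auto
  finally show "real (card S) \<le> 2 ^ (k + 1) * sum w S" by (simp add: field_simps)
  have "real (card S) / 4 ^ (k + 1) = (\<Sum>b\<in>S. (1 / 2 ^ (k + 1))\<^sup>2)"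
    by (simp add: power2_eq_square flip: power_mult_distrib)
  also have "\<dots> \<le> (\<Sum>b\<in>S. (w b)\<^sup>2)"
    using assms(2) by (intro sum_mono power_mono less_imp_le) auto
  finally show "real (card S) \<le> 4 ^ (k + 1) * (\<Sum>b\<in>S. (w b)\<^sup>2)" by (simp add: field_simps)
qed

lemma weighted_sum_level_le:
  fixes w g :: "'a \<Rightarrow> real"
  assumes S: "finite S" "S \<noteq> {}" and w: "\<And>b. b \<in> S \<Longrightarrow> w b \<le> 1 / 2 ^ k"
    and g: "\<And>b. b \<in> S \<Longrightarrow> 0 \<le> g b"
    and chunk: "sum g S \<le> A * real (card S) * (Q + real (card S) powr (- c / 2))"
  shows "(\<Sum>b\<in>S. w b * g b) \<le> A * (Q * (real (card S) / 2 ^ k) + real (card S) powr (1 - c / 2) / 2 ^ k)"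
proof -
  define s where "s = real (card S)"
  have s1: "1 \<le> s" unfolding s_def using S by (simp add: Suc_le_eq card_gt_0_iff)
  have "(\<Sum>b\<in>S. w b * g b) \<le> (\<Sum>b\<in>S. g b / 2 ^ k)"
  proof (rule sum_mono)
    fix b assume b: "b \<in> S"
    have "w b * g b \<le> 1 / 2 ^ k * g b" using w[OF b] g[OF b] by (rule mult_right_mono)
    then show "w b * g b \<le> g b / 2 ^ k" by simp
  qed
  also have "\<dots> \<le> A * s * (Q + s powr (- c / 2)) / 2 ^ k"
    using chunk unfolding s_def by (simp add: sum_divide_distrib[symmetric] divide_right_mono)
  also have "\<dots> = A * (Q * (s / 2 ^ k) + s * s powr (- c / 2) / 2 ^ k)" by (simp add: field_simps)
  also have "s * s powr (- c / 2) = s powr (1 - c / 2)" using s1 powr_add[of s 1 "- c / 2"] by simp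
  finally show ?thesis unfolding s_def .
qed

text \<open>Splitting the weights into dyadic levels $2^{-k-1} < w \leq 2^{-k}$ turns a bound for
  $\sum_{b\in S} g(b)$ over arbitrary sets into a bound for $\sum_b w(b)\, g(b)$.\<close>

lemma dyadic_weighted_sum_le:
  fixes w g :: "'a \<Rightarrow> real"
  assumes c: "0 < c" "c < 1" and P: "finite P"
    and w: "\<And>b. b \<in> P \<Longrightarrow> 0 < w b \<and> w b \<le> 1" "sum w P \<le> 1"
    and L: "(\<Sum>b\<in>P. (w b)\<^sup>2) \<le> L" "0 < L" "L \<le> 1"
    and g: "\<And>b. b \<in> P \<Longrightarrow> 0 \<le> g b" and A: "0 \<le> A" and Q: "0 \<le> Q"
    and chunk: "\<And>S. S \<subseteq> P \<Longrightarrow> S \<noteq> {} \<Longrightarrow> sum g S \<le> A * real (card S) * (Q + real (card S) powr (- c / 2))"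
  shows "(\<Sum>b\<in>P. w b * g b) \<le> A * (Q * 2 + dyadic_constant c * L powr (c / 2))"
proof -
  define level where "level b = dyadic_level (w b)" for b
  define B where "B k = {b \<in> P. level b = k}" for k
  define s where "s k = real (card (B k))" for k
  have finB: "finite (B k)" for k unfolding B_def using P by simp
  have BP: "B k \<subseteq> P" for k unfolding B_def by auto
  have w_le: "w b \<le> 1 / 2 ^ k" and w_gt: "1 / 2 ^ (k + 1) < w b" if "b \<in> B k" for b k
    using dyadic_level_bounds[of "w b"] w(1) that unfolding B_def level_def by auto
  have group: "(\<Sum>b\<in>P. f b) = (\<Sum>k\<in>level ` P. \<Sum>b\<in>B k. f b)" for f :: "'a \<Rightarrow> real"
    unfolding B_def by (rule sum.group[symmetric]) (use P in auto)
  have level_sum: "(\<Sum>b\<in>B k. w b * g b) \<le> A * (Q * (s k / 2 ^ k) + s k powr (1 - c / 2) / 2 ^ k)"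
    if k: "k \<in> level ` P" for k
  proof -
    have "B k \<noteq> {}" using k unfolding B_def by auto
    then show ?thesis unfolding s_def
    proof (rule weighted_sum_level_le[OF finB])
      show "w b \<le> 1 / 2 ^ k" if "b \<in> B k" for b using w_le[OF that] .
      show "0 \<le> g b" if "b \<in> B k" for b using g BP that by blast
      show "sum g (B k) \<le> A * real (card (B k)) * (Q + real (card (B k)) powr (- c / 2))"
        using chunk[OF BP \<open>B k \<noteq> {}\<close>] .
    qed
  qed
  have s_bounds: "s k / 2 ^ k \<le> 2 * sum w (B k) \<and> 0 \<le> s k \<and> s k \<le> 2 ^ (k + 1) \<and> s k \<le> 4 ^ (k + 1) * L" for k
  proof -
    have "sum w (B k) \<le> sum w P" by (rule sum_mono2[OF P BP]) (use w(1) in force)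
    moreover have "(\<Sum>b\<in>B k. (w b)\<^sup>2) \<le> (\<Sum>b\<in>P. (w b)\<^sup>2)" by (rule sum_mono2[OF P BP]) simp
    ultimately have "sum w (B k) \<le> 1" and "(\<Sum>b\<in>B k. (w b)\<^sup>2) \<le> L" using w(2) L(1) by linarith+
    moreover note card_le_of_weights_above[of "B k" k w, OF finB w_gt]
    ultimately have "s k \<le> 2 ^ (k + 1) * sum w (B k)" "2 ^ (k + 1) * sum w (B k) \<le> 2 ^ (k + 1)"
      "s k \<le> 4 ^ (k + 1) * (\<Sum>b\<in>B k. (w b)\<^sup>2)" "4 ^ (k + 1) * (\<Sum>b\<in>B k. (w b)\<^sup>2) \<le> 4 ^ (k + 1) * L"
      unfolding s_def by simp_all
    moreover from this(1) have "s k / 2 ^ k \<le> 2 * sum w (B k)" by (simp add: divide_le_eq mult_ac)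
    moreover have "0 \<le> s k" unfolding s_def by simp
    ultimately show ?thesis by linarith
  qed
  have "(\<Sum>b\<in>P. w b * g b) \<le> (\<Sum>k\<in>level ` P. A * (Q * (s k / 2 ^ k) + s k powr (1 - c / 2) / 2 ^ k))"
    unfolding group by (rule sum_mono) (rule level_sum)
  also have "\<dots> = A * (\<Sum>k\<in>level ` P. Q * (s k / 2 ^ k) + s k powr (1 - c / 2) / 2 ^ k)"
    by (rule sum_distrib_left[symmetric])
  also have "\<dots> = A * (Q * (\<Sum>k\<in>level ` P. s k / 2 ^ k) + (\<Sum>k\<in>level ` P. s k powr (1 - c / 2) / 2 ^ k))"
    by (simp only: sum.distrib sum_distrib_left)
  also have "\<dots> \<le> A * (Q * 2 + dyadic_constant c * L powr (c / 2))"
  proof (intro mult_left_mono add_mono A Q)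
    have "(\<Sum>k\<in>level ` P. s k / 2 ^ k) \<le> (\<Sum>k\<in>level ` P. 2 * sum w (B k))"
      using s_bounds by (intro sum_mono) auto
    also have "\<dots> = 2 * sum w P" by (simp add: group[of w] sum_distrib_left)
    finally show "(\<Sum>k\<in>level ` P. s k / 2 ^ k) \<le> 2" using w(2) by linarith
    show "(\<Sum>k\<in>level ` P. s k powr (1 - c / 2) / 2 ^ k) \<le> dyadic_constant c * L powr (c / 2)"
      using s_bounds by (intro sum_dyadic_terms_le c L(2,3)) (simp_all add: P)
  qed
  finally show ?thesis .
qed

section \<open>Consequences of Bourgain's estimate\<close>

lemma sum_sqrt_le_sqrt_card_mult:
  fixes E :: "'a \<Rightarrow> real"
  assumes "\<And>b. b \<in> B \<Longrightarrow> 0 \<le> E b"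
  shows "(\<Sum>b\<in>B. sqrt (E b)) \<le> sqrt (real (card B)) * sqrt (\<Sum>b\<in>B. E b)"
proof -
  have "(\<Sum>b\<in>B. 1 * sqrt (E b))\<^sup>2 \<le> (\<Sum>b\<in>B. 1\<^sup>2) * (\<Sum>b\<in>B. (sqrt (E b))\<^sup>2)"
    by (rule Cauchy_Schwarz_ineq_sum)
  also have "\<dots> = real (card B) * (\<Sum>b\<in>B. E b)" using assms by simp
  finally show ?thesis by (simp add: real_le_rsqrt flip: real_sqrt_mult)
qed

lemma bourgain_sum_sqrt_le_small:
  assumes bound: "bourgain_bound_on c K p D E" and K: "0 \<le> K" and E: "\<And>b. 0 \<le> E b"
    and B: "B \<subseteq> Fp_star p" "B \<noteq> {}" "card B \<le> card D" and p: "0 < p"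
  shows "(\<Sum>b\<in>B. sqrt (E b)) \<le> sqrt K * real (card D) powr (3/2) * real (card B)
            * (min (real_of_int p / real (card D)) (real (card B))) powr (- c / 2)"
proof -
  define m where "m = min (real_of_int p / real (card D)) (real (card B))"
  have m: "0 \<le> m" unfolding m_def using p by simp
  have "(\<Sum>b\<in>B. sqrt (E b)) \<le> sqrt (real (card B)) * sqrt (\<Sum>b\<in>B. E b)"
    by (rule sum_sqrt_le_sqrt_card_mult) (rule E)
  also have "\<dots> \<le> sqrt (real (card B)) * sqrt (K * m powr (- c) * real (card D) ^ 3 * real (card B))"
    using bourgain_bound_onD[OF bound B] unfolding m_def by (intro mult_left_mono real_sqrt_le_mono) auto
  also have "\<dots> = sqrt K * sqrt (real (card D) ^ 3) * real (card B) * sqrt (m powr (- c))"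
    by (simp add: real_sqrt_mult)
  also have "sqrt (real (card D) ^ 3) = real (card D) powr (3/2)"
    using powr_half_sqrt_powr[of "real (card D)" 3] powr_realpow'[of "real (card D)" 3] by simp
  also have "sqrt (m powr (- c)) = m powr (- c / 2)"
    using powr_half_sqrt_powr[of m "- c"] m by simp
  finally show ?thesis unfolding m_def .
qed

text \<open>Large sets of dilations are cut into chunks of size $|D|$, to each of which Bourgain's
  estimate applies.\<close>

lemma bourgain_sum_sqrt_le:
  assumes bound: "bourgain_bound_on c K p D E" and K: "0 \<le> K" and E: "\<And>b. 0 \<le> E b" and c: "0 < c"
    and p: "prime p" and D: "D \<subseteq> Fp p" "D \<noteq> {}" and B: "B \<subseteq> Fp_star p" "B \<noteq> {}"
  shows "(\<Sum>b\<in>B. sqrt (E b)) \<le> 2 * sqrt K * real (card D) powr (3/2) * real (card B)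
      * ((min (real_of_int p / real (card D)) (real (card D))) powr (- c / 2) + real (card B) powr (- c / 2))"
proof -
  define Q where "Q = min (real_of_int p / real (card D)) (real (card D))"
  define d where "d = real (card D)"
  have fB: "finite B" using B(1) by (rule finite_subset) simp
  have d1: "1 \<le> card D" using D by (simp add: Suc_le_eq card_gt_0_iff finite_subset)
  have p0: "0 < p" using prime_gt_1_int[OF p] by simp
  have Q0: "0 < Q" unfolding Q_def using p0 d1 by simp
  have SQ: "0 \<le> sqrt K * d powr (3/2)" using K by simp
  have "(\<Sum>b\<in>B. sqrt (E b)) \<le> 2 * sqrt K * d powr (3/2) * real (card B)
      * (Q powr (- c / 2) + real (card B) powr (- c / 2))"
  proof (cases "card B \<le> card D")
    case True
    have cB: "0 < card B" using B fB by (simp add: card_gt_0_iff)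
    have "(\<Sum>b\<in>B. sqrt (E b)) \<le> sqrt K * d powr (3/2) * real (card B)
        * (min (real_of_int p / d) (real (card B))) powr (- c / 2)"
      using bourgain_sum_sqrt_le_small[OF bound K E B True p0] unfolding d_def .
    also have "(min (real_of_int p / d) (real (card B))) powr (- c / 2) \<le> (min Q (real (card B))) powr (- c / 2)"
      by (rule powr_mono2') (use c Q0 cB in \<open>auto simp: Q_def d_def\<close>)
    also have "\<dots> \<le> Q powr (- c / 2) + real (card B) powr (- c / 2)"
      by (cases "Q \<le> real (card B)") (auto simp: min_def)
    finally have "(\<Sum>b\<in>B. sqrt (E b)) \<le> sqrt K * d powr (3/2) * real (card B)
        * (Q powr (- c / 2) + real (card B) powr (- c / 2))"
      using SQ by (simp add: mult_left_mono)
    also have "\<dots> \<le> 2 * sqrt K * d powr (3/2) * real (card B) * (Q powr (- c / 2) + real (card B) powr (- c / 2))"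
      using SQ by (simp add: mult_right_mono)
    finally show ?thesis .
  next
    case False
    define V where "V = sqrt K * d powr (3/2) * d * Q powr (- c / 2)"
    have "(\<Sum>b\<in>B. sqrt (E b)) \<le> 2 * real (card B) / real (card D) * V"
    proof (rule sum_le_by_chunks[OF fB d1])
      show "card D \<le> card B" using False by simp
      show "0 \<le> sqrt (E b)" for b by (simp add: E)
      fix S assume S: "S \<subseteq> B" "card S = card D"
      then have "S \<noteq> {}" using d1 by auto
      then show "(\<Sum>b\<in>S. sqrt (E b)) \<le> V"
        using bourgain_sum_sqrt_le_small[OF bound K E _ _ _ p0, of S] S B
        unfolding V_def Q_def d_def by simp
    qed
    also have "\<dots> = sqrt K * d powr (3/2) * real (card B) * (2 * Q powr (- c / 2))"
      unfolding V_def d_def using d1 by (simp add: field_simps)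
    also have "\<dots> \<le> sqrt K * d powr (3/2) * real (card B) * (2 * (Q powr (- c / 2) + real (card B) powr (- c / 2)))"
      using SQ by (intro mult_left_mono) auto
    finally show ?thesis by (simp only: mult_ac)
  qed
  then show ?thesis unfolding Q_def d_def .
qed

lemma weighted_sum_sqrt_energy_le:
  assumes c: "0 < c" "c < 1" and K: "0 \<le> K" and p: "prime p" and lam: "prob_measure p lam"
    and D: "D \<subseteq> Fp p" "D \<noteq> {}" and bound: "bourgain_bound_on c K p D E" and E: "\<And>b. 0 \<le> E b"
  shows "(\<Sum>b\<in>Fp_star p. lam b * sqrt (E b)) \<le> 2 * sqrt K * (2 + dyadic_constant c) * real (card D) powr (3/2)
      * ((min (real_of_int p / real (card D)) (real (card D))) powr (- c / 2)
         + (\<Sum>x\<in>Fp p. (lam x)\<^sup>2) powr (c / 2))"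
proof -
  define Q where "Q = (min (real_of_int p / real (card D)) (real (card D))) powr (- c / 2)"
  define L where "L = (\<Sum>x\<in>Fp p. (lam x)\<^sup>2)"
  define A where "A = 2 * sqrt K * real (card D) powr (3/2)"
  define P where "P = {b \<in> Fp_star p. 0 < lam b}"
  have PF: "P \<subseteq> Fp p" unfolding P_def using Fp_star_subset_Fp by auto
  have l0: "\<And>x. x \<in> Fp p \<Longrightarrow> 0 \<le> lam x" using prob_measure_nonneg[OF lam] .
  have "(\<Sum>b\<in>Fp_star p. lam b * sqrt (E b)) = (\<Sum>b\<in>P. lam b * sqrt (E b))"
    using l0 Fp_star_subset_Fp unfolding P_def
    by (intro sum.mono_neutral_right) (auto simp: order.order_iff_strict)
  also have "\<dots> \<le> A * (Q * 2 + dyadic_constant c * L powr (c / 2))"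
  proof (rule dyadic_weighted_sum_le[OF c])
    show "finite P" unfolding P_def by simp
    show "0 < lam b \<and> lam b \<le> 1" if "b \<in> P" for b
      using that prob_measure_le_1[OF lam] PF unfolding P_def by auto
    show "sum lam P \<le> 1"
      using sum_mono2[OF Fp_finite PF, of lam] l0 prob_measure_sum[OF lam] by auto
    show "(\<Sum>b\<in>P. (lam b)\<^sup>2) \<le> L" unfolding L_def by (rule sum_mono2[OF Fp_finite PF]) simp
    obtain x where "x \<in> Fp p" "lam x \<noteq> 0"
      using prob_measure_sum[OF lam] by (metis sum.neutral zero_neq_one)
    then show "0 < L" unfolding L_def by (intro sum_pos2[OF Fp_finite]) auto
    have "L \<le> (\<Sum>x\<in>Fp p. lam x)" unfolding L_def
      using l0 prob_measure_le_1[OF lam] by (intro sum_mono) (simp add: power2_eq_square mult_left_le)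
    then show "L \<le> 1" using prob_measure_sum[OF lam] by simp
    show "0 \<le> A" "0 \<le> Q" unfolding A_def Q_def using K by simp_all
    show "0 \<le> sqrt (E b)" for b using E by simp
    show "sum (\<lambda>b. sqrt (E b)) S \<le> A * real (card S) * (Q + real (card S) powr (- c / 2))"
      if "S \<subseteq> P" "S \<noteq> {}" for S
      using bourgain_sum_sqrt_le[OF bound K E c(1) p D, of S] that unfolding P_def A_def Q_def by auto
  qed
  also have "\<dots> \<le> A * ((2 + dyadic_constant c) * (Q + L powr (c / 2)))"
    unfolding A_def using dyadic_constant_pos[OF c] K by (intro mult_left_mono) (auto simp: algebra_simps Q_def)
  finally show ?thesis unfolding A_def Q_def L_def by (simp only: mult_ac)
qed

section \<open>Truncating the measure\<close>

lemma norm2_conv_add_left_le: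
  "norm2 p (conv p (\<lambda>x. f x + g x) h) \<le> norm2 p (conv p f h) + norm2 p (conv p g h)"
  unfolding conv_add_left by (rule norm2_triangle)

lemma norm2_conv_dil_add_right_le:
  "norm2 p (conv p h (dil p b (\<lambda>x. f x + g x))) \<le> norm2 p (conv p h (dil p b f)) + norm2 p (conv p h (dil p b g))"
  unfolding dil_add conv_add_right by (rule norm2_triangle)

lemma norm2_conv_dil_le_sum_left:
  assumes "prime (p::int)" and "b \<in> Fp_star p" and "\<And>y. y \<in> Fp p \<Longrightarrow> 0 \<le> f y"
  shows "norm2 p (conv p f (dil p b g)) \<le> (\<Sum>y\<in>Fp p. f y) * norm2 p g"
  using norm2_conv_le_sum_left[of p f "dil p b g"] norm2_dil[OF assms(1,2)] assms by simp

lemma norm2_conv_dil_le_sum_right: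
  assumes "prime (p::int)" and "b \<in> Fp_star p" and "\<And>y. y \<in> Fp p \<Longrightarrow> 0 \<le> g y"
  shows "norm2 p (conv p f (dil p b g)) \<le> norm2 p f * (\<Sum>y\<in>Fp p. g y)"
  using norm2_conv_le_sum_right[of p "dil p b g" f] dil_nonneg[OF assms] sum_dil[OF assms(1,2), of "\<lambda>t. t" g]
    assms(1) by simp

lemma norm2_lower_part_le:
  assumes mu: "prob_measure p mu" and a: "0 \<le> a"
  shows "norm2 p (\<lambda>x. if mu x \<le> a then mu x else 0) \<le> sqrt a"
proof -
  have "(\<Sum>x\<in>Fp p. (if mu x \<le> a then mu x else 0)\<^sup>2) \<le> (\<Sum>x\<in>Fp p. a * mu x)"
    using prob_measure_nonneg[OF mu] a
    by (intro sum_mono) (auto simp: power2_eq_square intro: mult_right_mono)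
  also have "\<dots> = a" using prob_measure_sum[OF mu] by (simp flip: sum_distrib_left)
  finally show ?thesis using a by (simp add: norm2_le_iff_squared_le)
qed

lemma sum_upper_part_le:
  assumes mu: "prob_measure p mu" and h: "0 < h"
  shows "(\<Sum>x\<in>Fp p. if h < mu x then mu x else 0) \<le> (\<Sum>x\<in>Fp p. (mu x)\<^sup>2) / h"
proof -
  have "(\<Sum>x\<in>Fp p. if h < mu x then mu x else 0) \<le> (\<Sum>x\<in>Fp p. (mu x)\<^sup>2 / h)"
  proof (rule sum_mono)
    fix x assume "x \<in> Fp p"
    then have "0 \<le> mu x" by (rule prob_measure_nonneg[OF mu])
    then show "(if h < mu x then mu x else 0) \<le> (mu x)\<^sup>2 / h"
      using h by (auto simp: power2_eq_square pos_le_divide_eq intro: mult_left_mono)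
  qed
  then show ?thesis by (simp add: sum_divide_distrib)
qed

definition middle_part :: "(int \<Rightarrow> real) \<Rightarrow> real \<Rightarrow> real \<Rightarrow> int \<Rightarrow> real" where
  "middle_part f a h x = (if a < f x \<and> f x \<le> h then f x else 0)"

lemma middle_part_nonneg: "prob_measure p mu \<Longrightarrow> x \<in> Fp p \<Longrightarrow> 0 \<le> middle_part mu a h x"
  unfolding middle_part_def using prob_measure_nonneg by auto

lemma middle_part_le_indicator:
  assumes "prob_measure p mu" and "x \<in> Fp p"
  shows "0 \<le> middle_part mu a h x
    \<and> middle_part mu a h x \<le> (if x \<in> {y \<in> Fp p. a < mu y \<and> mu y \<le> h} then h else 0)"
  using assms prob_measure_nonneg unfolding middle_part_def by auto

lemma card_middle_level_set_le:
  assumes mu: "prob_measure p mu" and a: "0 \<le> a"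
  shows "real (card {x \<in> Fp p. a < mu x \<and> mu x \<le> h}) * a \<le> 1"
proof -
  have "real (card {x \<in> Fp p. a < mu x \<and> mu x \<le> h}) * a = (\<Sum>x\<in>{x \<in> Fp p. a < mu x \<and> mu x \<le> h}. a)"
    by simp
  also have "\<dots> \<le> (\<Sum>x\<in>{x \<in> Fp p. a < mu x \<and> mu x \<le> h}. mu x)" by (intro sum_mono) simp
  also have "\<dots> \<le> (\<Sum>x\<in>Fp p. mu x)" using prob_measure_nonneg[OF mu] by (intro sum_mono2) auto
  finally show ?thesis using prob_measure_sum[OF mu] by simp
qed

lemma norm2_conv_dil_middle_part_le_card:
  assumes p: "prime p" and b: "b \<in> Fp_star p" and mu: "prob_measure p mu" and h: "0 \<le> h"
  shows "norm2 p (conv p (middle_part mu a h) (dil p b (middle_part mu a h)))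
    \<le> h * real (card {x \<in> Fp p. a < mu x \<and> mu x \<le> h}) * norm2 p mu"
proof -
  define D where "D = {x \<in> Fp p. a < mu x \<and> mu x \<le> h}"
  have "norm2 p (conv p (middle_part mu a h) (dil p b (middle_part mu a h)))
      \<le> (\<Sum>y\<in>Fp p. middle_part mu a h y) * norm2 p (middle_part mu a h)"
    using middle_part_nonneg[OF mu] by (rule norm2_conv_dil_le_sum_left[OF p b])
  also have "\<dots> \<le> (\<Sum>y\<in>Fp p. if y \<in> D then h else 0) * norm2 p mu"
  proof (rule mult_mono)
    show "(\<Sum>y\<in>Fp p. middle_part mu a h y) \<le> (\<Sum>y\<in>Fp p. if y \<in> D then h else 0)"
      using middle_part_le_indicator[OF mu] unfolding D_def by (intro sum_mono) blast
    show "norm2 p (middle_part mu a h) \<le> norm2 p mu"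
      by (rule norm2_mono) (use prob_measure_nonneg[OF mu] in \<open>auto simp: middle_part_def\<close>)
    show "0 \<le> (\<Sum>y\<in>Fp p. if y \<in> D then h else 0)" using h by (intro sum_nonneg) auto
  qed (rule norm2_nonneg)
  also have "(\<Sum>y\<in>Fp p. if y \<in> D then h else 0) = h * real (card D)"
    unfolding D_def by (simp add: sum.If_cases Int_def)
  finally show ?thesis unfolding D_def .
qed

text \<open>Cutting off the values of $\mu$ below $a$ and above $h$ costs $O(\sqrt a + \|\mu\|_2^3/h)$,
  by Young's inequality in the $L^1$ or the $L^2$ factor, as appropriate.\<close>

lemma norm2_conv_dil_le_middle_part:
  assumes p: "prime p" and mu: "prob_measure p mu" and b: "b \<in> Fp_star p"
    and a: "0 \<le> a" and h: "0 < h" "a \<le> h"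
  defines "m \<equiv> middle_part mu a h"
  shows "norm2 p (conv p mu (dil p b mu)) \<le> norm2 p (conv p m (dil p b m))
           + 2 * sqrt a + 2 * ((\<Sum>x\<in>Fp p. (mu x)\<^sup>2) / h) * norm2 p mu"
proof -
  define l where "l x = (if mu x \<le> a then mu x else 0)" for x
  define u where "u x = (if h < mu x then mu x else 0)" for x
  define M where "M = (\<Sum>x\<in>Fp p. (mu x)\<^sup>2)"
  have mu_eq: "mu = (\<lambda>x. m x + (l x + u x))"
    unfolding m_def middle_part_def l_def u_def using h by (auto intro!: ext)
  have l0: "\<And>x. x \<in> Fp p \<Longrightarrow> 0 \<le> l x" and u0: "\<And>x. x \<in> Fp p \<Longrightarrow> 0 \<le> u x"
    unfolding l_def u_def using prob_measure_nonneg[OF mu] by auto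
  have m0: "\<And>x. x \<in> Fp p \<Longrightarrow> 0 \<le> m x" unfolding m_def by (rule middle_part_nonneg[OF mu])
  have sum_m: "(\<Sum>x\<in>Fp p. m x) \<le> 1"
    using sum_mono[of "Fp p" m mu] prob_measure_nonneg[OF mu] prob_measure_sum[OF mu]
    unfolding m_def middle_part_def by fastforce
  have norm_m: "norm2 p m \<le> norm2 p mu"
    unfolding m_def middle_part_def by (rule norm2_mono) (use prob_measure_nonneg[OF mu] in auto)
  have norm_l: "norm2 p l \<le> sqrt a" unfolding l_def by (rule norm2_lower_part_le[OF mu a])
  have sum_u: "(\<Sum>x\<in>Fp p. u x) \<le> M / h" unfolding u_def M_def by (rule sum_upper_part_le[OF mu h(1)])
  have "norm2 p (conv p m (dil p b l)) \<le> (\<Sum>y\<in>Fp p. m y) * norm2 p l"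
    using m0 by (rule norm2_conv_dil_le_sum_left[OF p b])
  also have "\<dots> \<le> 1 * sqrt a"
    using sum_m norm_l sum_nonneg[OF m0] norm2_nonneg[of p l] by (intro mult_mono) auto
  finally have ml: "norm2 p (conv p m (dil p b l)) \<le> sqrt a" by simp
  have "norm2 p (conv p m (dil p b u)) \<le> norm2 p m * (\<Sum>y\<in>Fp p. u y)"
    using u0 by (rule norm2_conv_dil_le_sum_right[OF p b])
  also have "\<dots> \<le> norm2 p mu * (M / h)"
    using norm_m sum_u sum_nonneg[OF u0] norm2_nonneg[of p m] by (intro mult_mono) auto
  finally have mu': "norm2 p (conv p m (dil p b u)) \<le> norm2 p mu * (M / h)" .
  have "norm2 p (conv p l (dil p b mu)) \<le> norm2 p l * (\<Sum>y\<in>Fp p. mu y)"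
    using prob_measure_nonneg[OF mu] by (rule norm2_conv_dil_le_sum_right[OF p b])
  then have lmu: "norm2 p (conv p l (dil p b mu)) \<le> sqrt a"
    using norm_l prob_measure_sum[OF mu] by simp
  have "norm2 p (conv p u (dil p b mu)) \<le> (\<Sum>y\<in>Fp p. u y) * norm2 p mu"
    using u0 by (rule norm2_conv_dil_le_sum_left[OF p b])
  also have "\<dots> \<le> norm2 p mu * (M / h)"
    using mult_right_mono[OF sum_u norm2_nonneg[of p mu]] by (simp only: mult.commute)
  finally have umu: "norm2 p (conv p u (dil p b mu)) \<le> norm2 p mu * (M / h)" .
  have "norm2 p (conv p mu (dil p b mu)) \<le> norm2 p (conv p m (dil p b m))
      + (norm2 p (conv p m (dil p b l)) + norm2 p (conv p m (dil p b u)))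
      + (norm2 p (conv p l (dil p b mu)) + norm2 p (conv p u (dil p b mu)))"
    using norm2_conv_add_left_le[of p m "\<lambda>x. l x + u x" "dil p b mu"]
      norm2_conv_add_left_le[of p l u "dil p b mu"]
      norm2_conv_dil_add_right_le[of p m b m "\<lambda>x. l x + u x"]
      norm2_conv_dil_add_right_le[of p m b l u]
    by (simp flip: mu_eq)
  with ml mu' lmu umu have "norm2 p (conv p mu (dil p b mu))
      \<le> norm2 p (conv p m (dil p b m)) + 2 * sqrt a + 2 * (norm2 p mu * (M / h))"
    by argo
  then show ?thesis unfolding M_def by (simp add: ac_simps)
qed



lemma power2_powr: "0 \<le> (x::real) \<Longrightarrow> (x\<^sup>2) powr e = x powr (2 * e)"
  using powr_powr[of x 2 e] by simp

text \<open>Here $X < 1$ is the bracket of the theorem, $n = \|\mu\|_2$, $l = \|\lambda\|_2$,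
  $\delta = X^{c/7}$, and $d$ is the size of the level set of $\mu$ between $\delta^2 n^2$ and
  $n^2/\delta$; it is large, $d > (\delta/X)^2$, in the case where Bourgain's estimate is used.\<close>

lemma energy_case_bracket_le:
  fixes c X n l p d \<delta> :: real
  assumes c: "0 < c" "c < 1" and n: "0 < n" and X: "X < 1" "n \<le> X" "l \<le> X" "0 \<le> l"
    and p: "0 < p" "1 / (n * sqrt p) \<le> X" and \<delta>: "\<delta> = X powr (c / 7)"
    and d: "d * (\<delta> * n)\<^sup>2 \<le> 1" "(\<delta> / X)\<^sup>2 < d"
  shows "(min (p / d) d) powr (- c / 2) + (l\<^sup>2) powr (c / 2) \<le> 2 * X powr (c - c\<^sup>2 / 7)"
proof -
  have X0: "0 < X" using n X by simp
  have \<delta>0: "0 < \<delta>" unfolding \<delta> using X0 by simp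
  define N where "N = (\<delta> / X)\<^sup>2"
  have N0: "0 < N" unfolding N_def using \<delta>0 X0 by simp
  have "1 \<le> X * (n * sqrt p)" using p n X0 by (simp add: field_simps)
  then have "1 \<le> (X * (n * sqrt p))\<^sup>2" by (simp add: one_le_power)
  then have "1 \<le> p * (X * n)\<^sup>2" using p by (simp add: power_mult_distrib ac_simps)
  then have "\<delta>\<^sup>2 * 1 \<le> \<delta>\<^sup>2 * (p * (X * n)\<^sup>2)" by (intro mult_left_mono) auto
  then have "N \<le> p * (\<delta> * n)\<^sup>2"
    unfolding N_def using X0 by (simp add: field_simps power_mult_distrib)
  also have "\<dots> \<le> p / d" using d N0 p unfolding N_def by (simp add: field_simps)
  finally have "N \<le> min (p / d) d" using d(2) unfolding N_def by simp
  then have "(min (p / d) d) powr (- c / 2) \<le> N powr (- c / 2)"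
    using N0 c by (intro powr_mono2') auto
  also have "N powr (- c / 2) = (\<delta> / X) powr (- c)"
    unfolding N_def using \<delta>0 X0 by (simp add: power2_powr)
  also have "\<delta> / X = X powr (c / 7 - 1)" unfolding \<delta> using X0 by (simp add: powr_diff)
  also have "(X powr (c / 7 - 1)) powr (- c) = X powr (c - c\<^sup>2 / 7)"
    by (simp add: powr_powr power2_eq_square algebra_simps)
  finally have first: "(min (p / d) d) powr (- c / 2) \<le> X powr (c - c\<^sup>2 / 7)" .
  have "(l\<^sup>2) powr (c / 2) = l powr c" using X(4) by (simp add: power2_powr)
  also have "\<dots> \<le> X powr c" using X(3,4) c by (intro powr_mono2) auto
  also have "\<dots> \<le> X powr (c - c\<^sup>2 / 7)"
    using X0 X(1) c by (intro powr_mono') (auto simp: power2_eq_square)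
  finally show ?thesis using first by simp
qed

lemma energy_case_numeric_le:
  fixes c X n l p d \<delta> :: real
  assumes c: "0 < c" "c < 1" and n: "0 < n" and X: "X < 1" "n \<le> X" "l \<le> X" "0 \<le> l"
    and p: "0 < p" "1 / (n * sqrt p) \<le> X" and \<delta>: "\<delta> = X powr (c / 7)"
    and d: "d * (\<delta> * n)\<^sup>2 \<le> 1" "(\<delta> / X)\<^sup>2 < d"
  shows "(n\<^sup>2 / \<delta>)\<^sup>2 * d powr (3/2) * ((min (p / d) d) powr (- c / 2) + (l\<^sup>2) powr (c / 2)) \<le> 2 * \<delta> * n"
proof -
  have X0: "0 < X" using n X by simp
  have \<delta>0: "0 < \<delta>" unfolding \<delta> using X0 by simp
  define y where "y = \<delta> * n"
  have y0: "0 < y" unfolding y_def using \<delta>0 n by simp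
  have d0: "0 < d" using d(2) \<delta>0 X0 by (smt (verit) zero_less_power2 divide_pos_pos)
  have "d powr (3/2) \<le> (1 / y\<^sup>2) powr (3/2)"
    using d(1) y0 d0 unfolding y_def[symmetric] by (intro powr_mono2) (auto simp: field_simps)
  also have "\<dots> = 1 / y ^ 3"
    using y0 power2_powr[of "1 / y" "3 / 2"] by (simp add: power_one_over)
  finally have dpow: "d powr (3/2) \<le> 1 / y ^ 3" .
  have "X powr (c - c\<^sup>2 / 7) \<le> X powr (6 * c / 7)"
    using X0 X(1) c by (intro powr_mono') (auto simp: power2_eq_square field_simps)
  also have "\<dots> = \<delta> ^ 6" unfolding \<delta> using X0 powr_power[of X "c / 7" 6] by simp
  finally have X\<delta>: "X powr (c - c\<^sup>2 / 7) \<le> \<delta> ^ 6" .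
  have "(n\<^sup>2 / \<delta>)\<^sup>2 * d powr (3/2) * ((min (p / d) d) powr (- c / 2) + (l\<^sup>2) powr (c / 2))
      \<le> (n\<^sup>2 / \<delta>)\<^sup>2 * (1 / y ^ 3) * (2 * \<delta> ^ 6)"
    using energy_case_bracket_le[OF assms] X\<delta> dpow y0
    by (intro mult_mono) auto
  also have "\<dots> = 2 * \<delta> * n"
    unfolding y_def using \<delta>0 n by (simp add: field_simps power2_eq_square) (simp add: eval_nat_numeral)
  finally show ?thesis .
qed

lemma sum_conv_dil_middle_part_le_energy:
  assumes c: "0 < c" "c < 1" and K: "0 \<le> K" and p: "prime p"
    and lam: "prob_measure p lam" and mu: "prob_measure p mu" and h: "0 \<le> h"
    and D: "D = {x \<in> Fp p. a < mu x \<and> mu x \<le> h}" "D \<noteq> {}"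
    and bound: "bourgain_bound_on c K p D (\<lambda>b. real (add_energy p D (dilset p b D)))"
  shows "(\<Sum>b\<in>Fp_star p. lam b * norm2 p (conv p (middle_part mu a h) (dil p b (middle_part mu a h))))
    \<le> 2 * sqrt K * (2 + dyadic_constant c) * (h\<^sup>2 * real (card D) powr (3/2)
      * ((min (real_of_int p / real (card D)) (real (card D))) powr (- c / 2) + (norm2 p lam)\<^sup>2 powr (c / 2)))"
proof -
  have DF: "D \<subseteq> Fp p" unfolding D by auto
  have "(\<Sum>b\<in>Fp_star p. lam b * norm2 p (conv p (middle_part mu a h) (dil p b (middle_part mu a h))))
      \<le> (\<Sum>b\<in>Fp_star p. lam b * (h\<^sup>2 * sqrt (real (add_energy p D (dilset p b D)))))"
    using norm2_conv_dil_le_energy[OF p _ DF h] middle_part_le_indicator[OF mu]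
      prob_measure_nonneg[OF lam subsetD[OF Fp_star_subset_Fp]]
    unfolding D by (intro sum_mono mult_left_mono) auto
  also have "\<dots> = h\<^sup>2 * (\<Sum>b\<in>Fp_star p. lam b * sqrt (real (add_energy p D (dilset p b D))))"
    by (simp add: sum_distrib_left mult_ac)
  also have "\<dots> \<le> h\<^sup>2 * (2 * sqrt K * (2 + dyadic_constant c) * real (card D) powr (3/2)
      * ((min (real_of_int p / real (card D)) (real (card D))) powr (- c / 2) + (norm2 p lam)\<^sup>2 powr (c / 2)))"
    using weighted_sum_sqrt_energy_le[OF c K p lam DF D(2) bound] by (intro mult_left_mono) (simp_all add: norm2_squared)
  finally show ?thesis by (simp only: mult_ac)
qed

lemma sum_conv_dil_middle_part_le:
  fixes c K X \<delta> :: real and lam mu :: "int \<Rightarrow> real"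
  assumes c: "0 < c" "c < 1" and K: "0 \<le> K"
    and bound: "\<And>D. D \<subseteq> Fp p \<Longrightarrow> bourgain_bound_on c K p D (\<lambda>b. real (add_energy p D (dilset p b D)))"
    and p: "prime p" and lam: "prob_measure p lam" and mu: "prob_measure p mu"
    and X: "X = norm2 p lam + norm2 p mu + 1 / (norm2 p mu * sqrt (real_of_int p))" "X < 1"
    and \<delta>: "\<delta> = X powr (c / 7)"
  defines "M \<equiv> (\<Sum>x\<in>Fp p. (mu x)\<^sup>2)"
  defines "m \<equiv> middle_part mu (\<delta>\<^sup>2 * M) (M / \<delta>)"
  shows "(\<Sum>b\<in>Fp_star p. lam b * norm2 p (conv p m (dil p b m)))
           \<le> (1 + 2 * (2 * sqrt K * (2 + dyadic_constant c))) * \<delta> * norm2 p mu"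
proof -
  define n where "n = norm2 p mu"
  define C1 where "C1 = 2 * sqrt K * (2 + dyadic_constant c)"
  define D where "D = {x \<in> Fp p. \<delta>\<^sup>2 * M < mu x \<and> mu x \<le> M / \<delta>}"
  have C1: "0 \<le> C1" unfolding C1_def using K dyadic_constant_pos[OF c] by simp
  have n: "0 < n" unfolding n_def by (rule norm2_prob_measure_pos[OF mu])
  have Mn: "M = n\<^sup>2" unfolding M_def n_def by (simp add: norm2_squared)
  have p0: "0 < real_of_int p" using prime_gt_1_int[OF p] by simp
  have X_ge: "n \<le> X" "norm2 p lam \<le> X" "1 / (n * sqrt (real_of_int p)) \<le> X"
    using X(1) n p0 norm2_nonneg[of p lam] unfolding n_def by auto
  then have X0: "0 < X" using n by linarith
  have \<delta>0: "0 < \<delta>" unfolding \<delta> using X0 by simp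
  have card_D: "real (card D) * (\<delta> * n)\<^sup>2 \<le> 1"
    using card_middle_level_set_le[OF mu, of "\<delta>\<^sup>2 * M" "M / \<delta>"] unfolding D_def Mn
    by (simp add: power_mult_distrib)
  have "(\<Sum>b\<in>Fp_star p. lam b * norm2 p (conv p m (dil p b m))) \<le> 2 * C1 * \<delta> * n + \<delta> * n"
  proof (cases "real (card D) \<le> (\<delta> / X)\<^sup>2")
    case True
    have "(n / X)\<^sup>2 \<le> 1" using X_ge(1) X0 n by (simp add: power_le_one)
    have "M / \<delta> * real (card D) * n \<le> M / \<delta> * (\<delta> / X)\<^sup>2 * n"
      using True n \<delta>0 Mn by (intro mult_right_mono mult_left_mono) auto
    also have "\<dots> = \<delta> * (n / X)\<^sup>2 * n" unfolding Mn using \<delta>0 by (simp add: field_simps power2_eq_square)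
    also have "\<dots> \<le> \<delta> * 1 * n"
      using \<open>(n / X)\<^sup>2 \<le> 1\<close> \<delta>0 n by (intro mult_right_mono mult_left_mono) auto
    finally have "(\<Sum>b\<in>Fp_star p. lam b * norm2 p (conv p m (dil p b m))) \<le> \<delta> * n"
      using norm2_conv_dil_middle_part_le_card[OF p _ mu, of _ "M / \<delta>" "\<delta>\<^sup>2 * M"] \<delta>0 Mn n
      unfolding m_def D_def n_def
      by (intro prob_measure_weighted_sum_le[OF lam Fp_star_subset_Fp]) (auto intro: order_trans)
    moreover have "0 \<le> 2 * C1 * \<delta> * n" using C1 \<delta>0 n by simp
    ultimately show ?thesis by linarith
  next
    case False
    then have "D \<noteq> {}" by auto
    then have "(\<Sum>b\<in>Fp_star p. lam b * norm2 p (conv p m (dil p b m)))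
        \<le> C1 * ((n\<^sup>2 / \<delta>)\<^sup>2 * real (card D) powr (3/2)
          * ((min (real_of_int p / real (card D)) (real (card D))) powr (- c / 2) + (norm2 p lam)\<^sup>2 powr (c / 2)))"
      using sum_conv_dil_middle_part_le_energy[OF c K p lam mu _ D_def _ bound[of D]] \<delta>0
      unfolding m_def C1_def Mn D_def by simp
    also have "\<dots> \<le> C1 * (2 * \<delta> * n)"
      using energy_case_numeric_le[OF c n X(2) X_ge(1,2) norm2_nonneg p0 X_ge(3) \<delta> card_D] False C1
      by (intro mult_left_mono) simp_all
    also have "\<dots> = 2 * C1 * \<delta> * n" by simp
    finally show ?thesis using mult_pos_pos[OF \<delta>0 n] by linarith
  qed
  then show ?thesis unfolding C1_def n_def by (simp add: algebra_simps)
qed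

lemma sum_conv_dil_le_norm2:
  assumes p: "prime p" and lam: "prob_measure p lam" and mu: "prob_measure p mu"
  shows "(\<Sum>b\<in>Fp_star p. lam b * norm2 p (conv p mu (dil p b mu))) \<le> norm2 p mu"
proof (rule prob_measure_weighted_sum_le[OF lam Fp_star_subset_Fp _ norm2_nonneg])
  fix b assume "b \<in> Fp_star p"
  then have "norm2 p (conv p mu (dil p b mu)) \<le> (\<Sum>y\<in>Fp p. mu y) * norm2 p mu"
    using prob_measure_nonneg[OF mu] by (rule norm2_conv_dil_le_sum_left[OF p])
  then show "norm2 p (conv p mu (dil p b mu)) \<le> norm2 p mu" using prob_measure_sum[OF mu] by simp
qed

lemma sum_conv_dil_le_middle_part:
  assumes p: "prime p" and lam: "prob_measure p lam" and mu: "prob_measure p mu"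
    and \<delta>: "0 < \<delta>" "\<delta> \<le> 1"
  defines "M \<equiv> (\<Sum>x\<in>Fp p. (mu x)\<^sup>2)"
  defines "m \<equiv> middle_part mu (\<delta>\<^sup>2 * M) (M / \<delta>)"
  shows "(\<Sum>b\<in>Fp_star p. lam b * norm2 p (conv p mu (dil p b mu)))
    \<le> (\<Sum>b\<in>Fp_star p. lam b * norm2 p (conv p m (dil p b m))) + 4 * \<delta> * norm2 p mu"
proof -
  have n: "0 < norm2 p mu" by (rule norm2_prob_measure_pos[OF mu])
  have Mn: "M = (norm2 p mu)\<^sup>2" unfolding M_def by (simp add: norm2_squared)
  have "\<delta>\<^sup>2 * M \<le> 1 * M" using \<delta> n Mn by (intro mult_right_mono) (auto simp: power_le_one)
  also have "\<dots> \<le> M / \<delta>" using \<delta> n Mn by (simp add: le_divide_eq mult_left_le)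
  finally have "\<delta>\<^sup>2 * M \<le> M / \<delta>" .
  then have "norm2 p (conv p mu (dil p b mu)) \<le> norm2 p (conv p m (dil p b m)) + 4 * \<delta> * norm2 p mu"
    if "b \<in> Fp_star p" for b
    using norm2_conv_dil_le_middle_part[OF p mu that, of "\<delta>\<^sup>2 * M" "M / \<delta>"] \<delta> n Mn
    unfolding m_def M_def[symmetric] by (simp add: real_sqrt_mult power2_eq_square)
  then have "(\<Sum>b\<in>Fp_star p. lam b * norm2 p (conv p mu (dil p b mu)))
      \<le> (\<Sum>b\<in>Fp_star p. lam b * norm2 p (conv p m (dil p b m)) + lam b * (4 * \<delta> * norm2 p mu))"
    using prob_measure_nonneg[OF lam subsetD[OF Fp_star_subset_Fp]]
    by (intro sum_mono) (simp add: mult_left_mono flip: distrib_left)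
  also have "\<dots> \<le> (\<Sum>b\<in>Fp_star p. lam b * norm2 p (conv p m (dil p b m))) + 4 * \<delta> * norm2 p mu"
    using prob_measure_weighted_sum_le[OF lam Fp_star_subset_Fp, of "\<lambda>_. 4 * \<delta> * norm2 p mu"] \<delta> n
    by (simp add: sum.distrib)
  finally show ?thesis .
qed

theorem theorem4:
  fixes c0 :: real
  assumes "0 < c0" and "bourgain_energy c0"
  shows "\<exists>C. \<forall>(p::int) lam mu. prime p \<and> prob_measure p lam \<and> prob_measure p mu \<longrightarrow>
     (\<Sum>b\<in>Fp_star p. lam b * norm2 p (conv p mu (dil p b mu)))
       \<le> C * (norm2 p lam + norm2 p mu + 1 / (norm2 p mu * sqrt (real_of_int p))) powr (c0 / 7)
           * norm2 p mu"
proof -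
  have c: "0 < c0" "c0 < 1" using assms bourgain_energy_exponent_lt_1 by auto
  obtain K where K: "0 \<le> K"
    and bound: "\<And>p D. prime p \<Longrightarrow> D \<subseteq> Fp p \<Longrightarrow> bourgain_bound_on c0 K p D (\<lambda>b. real (add_energy p D (dilset p b D)))"
    using bourgain_energy_obtains_constant[OF assms(2)] by blast
  define C where "C = 5 + 2 * (2 * sqrt K * (2 + dyadic_constant c0))"
  have C: "1 \<le> C" unfolding C_def using K dyadic_constant_pos[OF c] by simp
  show ?thesis
  proof (intro exI[of _ C] allI impI, elim conjE)
    fix p :: int and lam mu assume p: "prime p" and lam: "prob_measure p lam" and mu: "prob_measure p mu"
    define X where "X = norm2 p lam + norm2 p mu + 1 / (norm2 p mu * sqrt (real_of_int p))"
    have n: "0 < norm2 p mu" by (rule norm2_prob_measure_pos[OF mu])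
    have "0 \<le> 1 / (norm2 p mu * sqrt (real_of_int p))" using n prime_gt_1_int[OF p] by simp
    then have X0: "0 < X" unfolding X_def using n norm2_nonneg[of p lam] by linarith
    show "(\<Sum>b\<in>Fp_star p. lam b * norm2 p (conv p mu (dil p b mu))) \<le> C * X powr (c0 / 7) * norm2 p mu"
    proof (cases "1 \<le> X")
      case True
      then have "1 * 1 * norm2 p mu \<le> C * X powr (c0 / 7) * norm2 p mu"
        using C n c by (intro mult_right_mono mult_mono ge_one_powr_ge_zero) auto
      then show ?thesis using sum_conv_dil_le_norm2[OF p lam mu] by simp
    next
      case False
      have "X powr (c0 / 7) \<le> 1" using powr_less_mono2[of "c0 / 7" X 1] False X0 c by simp
      then show ?thesis
        using sum_conv_dil_le_middle_part[OF p lam mu, of "X powr (c0 / 7)"]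
          sum_conv_dil_middle_part_le[OF c K bound[OF p] p lam mu X_def _ refl] False X0
        unfolding C_def by (simp add: algebra_simps)
    qed
  qed
qed

end
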